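(* Let $\mathbb M$ be a sequential Morse matching on a finite-type based chain complex $(\mathbf C,I)$ of real inner product spaces, with associated maps $\Phi=\Phi^{\mathbb M}:\mathbf C^{\mathbb M}\to\mathbf C$, $\Psi=\Psi^{\mathbb M}:\mathbf C\to\mathbf C^{\mathbb M}$, and fix $n$. Then the conditions (1) $\mathrm{Proj}_{\operatorname{Ker}\partial_{n+1}^\dagger}(\Phi\Psi s-s)=0$ for all $s\in\mathbf C_n$, and (2) $\mathrm{Proj}_{\operatorname{Ker}\partial_{n-1}}(\Psi^\dagger\Phi^\dagger s-s)=0$ for all $s\in\mathbf C_{n-1}$ hold if and only if $\mathbb M$ is $(n,n-1)$-free.
   Context: Based chain complex: chain complex $(\mathbf C,\partial)$ of finite-dimensional real inner product spaces $\mathbf C_n$, $n\ge0$, with disjoint finite index sets $I_n$ and $\mathbf C_n=\bigoplus_{\alpha\in I_n}C_\alpha$ (summands not necessarily orthogonal); $\partial_{\beta,\alpha}=\pi_\beta\partial_n i_\alpha$. $\dagger$ is the adjoint (restricted inner products on subcomplexes), $\mathrm{Proj}_W$ orthogonal projection. Graph: edges $\alpha\to\beta$ when $\partial_{\beta,\alpha}\ne0$. Morse matching: edge set $M$ with each cell on at most one edge, $\partial_{\beta,\alpha}$ an isomorphism for $\alpha\to\beta\in M$, and "directed path from $\alpha$ to $\beta$ in the graph with $M$ reversed" a partial order on each $I_n$; $M^0$ = unmatched cells. With $\Gamma_{\beta,\alpha}$ the sum over directed paths from $\alpha$ to $\beta$ in the reversed graph of composites of $\partial_{\sigma_{i+1},\sigma_i}$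 (ordinary steps) and $-\partial_{\sigma_i,\sigma_{i+1}}^{-1}$ (reversed matched edges), the Morse complex is $\mathbf C^M_n=\bigoplus_{\alpha\in I_n\cap M^0}C_\alpha$ with boundary $\sum_{\beta\in M^0\cap I_{n-1}}\Gamma_{\beta,\alpha}$, and the Morse retraction is $\Phi^M=\sum_{\beta\in I_n}\Gamma_{\beta,\alpha}$ on critical $C_\alpha$, $\Psi^M=\sum_{\beta\in M^0\cap I_n}\Gamma_{\beta,\alpha}$ on $C_\alpha$. A sequential Morse matching $\mathbb M=(M_{(1)},\dots,M_{(k)})$: $M_{(1)}$ a Morse matching on $(\mathbf C,I)$, $M_{(j+1)}$ a Morse matching on the based complex $\mathbf C^{M_{(j)}}$; $\mathbf C^{\mathbb M}=\mathbf C^{M_{(k)}}$, $\Phi^{\mathbb M}=\Phi^{M_{(1)}}\circ\cdots\circ\Phi^{M_{(k)}}$, $\Psi^{\mathbb M}=\Psi^{M_{(k)}}\circ\cdots\circ\Psi^{M_{(1)}}$. $\mathbb M$ is $(n,n-1)$-free if no $M_{(j)}$ pairs an $n$-cell with an $(n-1)$-cell. *)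

theory Defs
  imports "HOL-Analysis.Analysis"
begin

text \<open>A based chain complex is represented inside one ambient real inner product space 'v.
  Degrees are integers (I n is empty for n < 0, so C n = 0 for n < 0).
  idx n is the index set I_n, cell a is the summand C_a (a subspace of 'v),
  and bd n is the boundary map from C_n to C_(n-1) (only its values on C_n matter).
  Inner products on all chain spaces are restrictions of the ambient inner product.\<close>

record ('a, 'v) bcx =
  idx  :: "int \<Rightarrow> 'a set"
  cell :: "'a \<Rightarrow> 'v set"
  bd   :: "int \<Rightarrow> 'v \<Rightarrow> 'v"

definition chsp :: "('a, 'v::real_vector) bcx \<Rightarrow> int \<Rightarrow> 'v set" where
  "chsp X n = {(\<Sum>a\<in>idx X n. f a) | f. \<forall>a\<in>idx X n. f a \<in> cell X a}"

text \<open>Component pi_b of a chain in C_n with respect to the (direct, not necessarily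
  orthogonal) decomposition C_n = sum of the C_a, a in I_n.\<close>
definition comp :: "('a, 'v::real_vector) bcx \<Rightarrow> int \<Rightarrow> 'a \<Rightarrow> 'v \<Rightarrow> 'v" where
  "comp X n b s = (THE f. (\<forall>a\<in>idx X n. f a \<in> cell X a) \<and> (\<forall>a. a \<notin> idx X n \<longrightarrow> f a = 0)
                        \<and> s = (\<Sum>a\<in>idx X n. f a)) b"

definition based_complex :: "('a, 'v::real_inner) bcx \<Rightarrow> bool" where
  "based_complex X \<longleftrightarrow>
     (\<forall>n. finite (idx X n)) \<and>
     (\<forall>n<0. idx X n = {}) \<and>
     (\<forall>n m. n \<noteq> m \<longrightarrow> idx X n \<inter> idx X m = {}) \<and>
     (\<forall>n. \<forall>a\<in>idx X n. \<exists>B. finite B \<and> cell X a = span B) \<and>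
     (\<forall>n f. (\<forall>a\<in>idx X n. f a \<in> cell X a) \<and> (\<Sum>a\<in>idx X n. f a) = 0
              \<longrightarrow> (\<forall>a\<in>idx X n. f a = 0)) \<and>
     (\<forall>n. \<forall>x\<in>chsp X n. \<forall>y\<in>chsp X n. bd X n (x + y) = bd X n x + bd X n y) \<and>
     (\<forall>n. \<forall>x\<in>chsp X n. \<forall>c. bd X n (c *\<^sub>R x) = c *\<^sub>R bd X n x) \<and>
     (\<forall>n. \<forall>x\<in>chsp X n. bd X n x \<in> chsp X (n - 1)) \<and>
     (\<forall>n. \<forall>x\<in>chsp X n. bd X (n - 1) (bd X n x) = 0)"

definition deg :: "('a, 'v) bcx \<Rightarrow> 'a \<Rightarrow> int" where
  "deg X a = (THE n. a \<in> idx X n)"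

definition dent :: "('a, 'v::real_vector) bcx \<Rightarrow> 'a \<Rightarrow> 'a \<Rightarrow> 'v \<Rightarrow> 'v" where
  "dent X b a x = comp X (deg X a - 1) b (bd X (deg X a) x)"

definition edge :: "('a, 'v::real_vector) bcx \<Rightarrow> 'a \<Rightarrow> 'a \<Rightarrow> bool" where
  "edge X a b \<longleftrightarrow> (\<exists>n. a \<in> idx X n \<and> b \<in> idx X (n - 1) \<and> (\<exists>x\<in>cell X a. dent X b a x \<noteq> 0))"

text \<open>The graph with the edges of M reversed (a pair (a,b) in M stands for the edge a -> b).\<close>
definition rgraph :: "('a, 'v::real_vector) bcx \<Rightarrow> ('a \<times> 'a) set \<Rightarrow> ('a \<times> 'a) set" where
  "rgraph X M = {(a, b). edge X a b \<and> (a, b) \<notin> M} \<union> {(b, a). (a, b) \<in> M}"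

definition morse_matching :: "('a, 'v::real_inner) bcx \<Rightarrow> ('a \<times> 'a) set \<Rightarrow> bool" where
  "morse_matching X M \<longleftrightarrow>
     (\<forall>(a, b)\<in>M. edge X a b) \<and>
     (\<forall>e1\<in>M. \<forall>e2\<in>M. e1 \<noteq> e2 \<longrightarrow> {fst e1, snd e1} \<inter> {fst e2, snd e2} = {}) \<and>
     (\<forall>(a, b)\<in>M. bij_betw (dent X b a) (cell X a) (cell X b)) \<and>
     (\<forall>n. partial_order_on (idx X n) (Restr ((rgraph X M)\<^sup>*) (idx X n)))"

definition crit :: "('a \<times> 'a) set \<Rightarrow> 'a set" where
  "crit M = {a. \<forall>b. (a, b) \<notin> M \<and> (b, a) \<notin> M}"

definition stepmap :: "('a, 'v::real_vector) bcx \<Rightarrow> ('a \<times> 'a) set \<Rightarrow> 'a \<Rightarrow> 'a \<Rightarrow> 'v \<Rightarrow> 'v" where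
  "stepmap X M s t = (if (t, s) \<in> M then (\<lambda>x. - inv_into (cell X t) (dent X s t) x)
                      else dent X t s)"

fun pathmap :: "('a, 'v::real_vector) bcx \<Rightarrow> ('a \<times> 'a) set \<Rightarrow> 'a list \<Rightarrow> 'v \<Rightarrow> 'v" where
  "pathmap X M (s # t # p) = pathmap X M (t # p) \<circ> stepmap X M s t"
| "pathmap X M p = id"

definition paths :: "('a, 'v::real_vector) bcx \<Rightarrow> ('a \<times> 'a) set \<Rightarrow> 'a \<Rightarrow> 'a \<Rightarrow> 'a list set" where
  "paths X M a b = {p. p \<noteq> [] \<and> hd p = a \<and> last p = b \<and>
                       (\<forall>i. Suc i < length p \<longrightarrow> (p ! i, p ! Suc i) \<in> rgraph X M)}"

definition Gamma :: "('a, 'v::real_vector) bcx \<Rightarrow> ('a \<times> 'a) set \<Rightarrow> 'a \<Rightarrow> 'a \<Rightarrow> 'v \<Rightarrow> 'v" where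
  "Gamma X M b a x = (\<Sum>p\<in>paths X M a b. pathmap X M p x)"

definition mcx :: "('a, 'v::real_vector) bcx \<Rightarrow> ('a \<times> 'a) set \<Rightarrow> ('a, 'v) bcx" where
  "mcx X M = \<lparr> idx = (\<lambda>n. idx X n \<inter> crit M), cell = cell X,
              bd = (\<lambda>n x. \<Sum>a\<in>idx X n \<inter> crit M. \<Sum>b\<in>idx X (n - 1) \<inter> crit M.
                                Gamma X M b a (comp X n a x)) \<rparr>"

definition Phi :: "('a, 'v::real_vector) bcx \<Rightarrow> ('a \<times> 'a) set \<Rightarrow> int \<Rightarrow> 'v \<Rightarrow> 'v" where
  "Phi X M n x = (\<Sum>a\<in>idx X n \<inter> crit M. \<Sum>b\<in>idx X n. Gamma X M b a (comp X n a x))"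

definition Psi :: "('a, 'v::real_vector) bcx \<Rightarrow> ('a \<times> 'a) set \<Rightarrow> int \<Rightarrow> 'v \<Rightarrow> 'v" where
  "Psi X M n x = (\<Sum>a\<in>idx X n. \<Sum>b\<in>idx X n \<inter> crit M. Gamma X M b a (comp X n a x))"

fun seq_morse :: "('a, 'v::real_inner) bcx \<Rightarrow> ('a \<times> 'a) set list \<Rightarrow> bool" where
  "seq_morse X [] = True"
| "seq_morse X (M # Ms) = (morse_matching X M \<and> seq_morse (mcx X M) Ms)"

fun seq_cx :: "('a, 'v::real_vector) bcx \<Rightarrow> ('a \<times> 'a) set list \<Rightarrow> ('a, 'v) bcx" where
  "seq_cx X [] = X"
| "seq_cx X (M # Ms) = seq_cx (mcx X M) Ms"

fun seq_Phi :: "('a, 'v::real_vector) bcx \<Rightarrow> ('a \<times> 'a) set list \<Rightarrow> int \<Rightarrow> 'v \<Rightarrow> 'v" where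
  "seq_Phi X [] n = id"
| "seq_Phi X (M # Ms) n = Phi X M n \<circ> seq_Phi (mcx X M) Ms n"

fun seq_Psi :: "('a, 'v::real_vector) bcx \<Rightarrow> ('a \<times> 'a) set list \<Rightarrow> int \<Rightarrow> 'v \<Rightarrow> 'v" where
  "seq_Psi X [] n = id"
| "seq_Psi X (M # Ms) n = seq_Psi (mcx X M) Ms n \<circ> Psi X M n"

definition nn_free :: "('a, 'v) bcx \<Rightarrow> ('a \<times> 'a) set list \<Rightarrow> int \<Rightarrow> bool" where
  "nn_free X Ms n \<longleftrightarrow> (\<forall>M\<in>set Ms. \<forall>(a, b)\<in>M. \<not> (a \<in> idx X n \<and> b \<in> idx X (n - 1)))"

definition adj :: "'v::real_inner set \<Rightarrow> 'w::real_inner set \<Rightarrow> ('v \<Rightarrow> 'w) \<Rightarrow> 'w \<Rightarrow> 'v" where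
  "adj V W f y = (THE z. z \<in> V \<and> (\<forall>x\<in>V. inner (f x) y = inner x z))"

definition proj :: "'v::real_inner set \<Rightarrow> 'v \<Rightarrow> 'v" where
  "proj W s = (THE w. w \<in> W \<and> (\<forall>u\<in>W. inner (s - w) u = 0))"

end

theory Submission
  imports Defs
begin

(*
  Each single Morse retraction Phi^M is an injective chain map that keeps the critical
  coefficients of a chain and whose image has zero coefficient on every lower partner b of
  a matched pair (a, b). For the composed maps, <Psi^* Phi^* s - s, u> = <s, Phi Psi u - u>,
  so condition (2) says exactly that Phi Psi fixes every (n-1)-cycle, and condition (1)
  holds as soon as Phi Psi s - s is a boundary, boundaries being orthogonal to Ker d^*.

  If no matching pairs an n-cell with an (n-1)-cell, both hold. For an (n-1)-cycle z the
  chain Phi Psi z - z vanishes on critical cells and its boundary vanishes on lower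
  partners, which forces it to be zero. In degree n we have Phi Psi s = Psi s, and Psi s - s
  is a boundary by induction along the acyclic reversed graph. Conversely, if M_(j) matches
  an n-cell a with an (n-1)-cell b, the boundary of a chain in C_a is a cycle with nonzero
  b-coefficient, hence outside the image of Phi^(M_(j)); the injective chain maps of the
  earlier matchings carry it to a cycle outside the image of Phi, which Phi Psi cannot fix.
*)

definition linear_on :: "'v::real_vector set \<Rightarrow> 'w::real_vector set \<Rightarrow> ('v \<Rightarrow> 'w) \<Rightarrow> bool" where
  "linear_on A B f \<longleftrightarrow> (\<forall>x\<in>A. f x \<in> B) \<and> (\<forall>x\<in>A. \<forall>y\<in>A. f (x + y) = f x + f y) \<and>
     (\<forall>x\<in>A. \<forall>c. f (c *\<^sub>R x) = c *\<^sub>R f x)"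

lemma linear_onI:
  "(\<And>x. x \<in> A \<Longrightarrow> f x \<in> B) \<Longrightarrow> (\<And>x y. x \<in> A \<Longrightarrow> y \<in> A \<Longrightarrow> f (x + y) = f x + f y) \<Longrightarrow>
   (\<And>x c. x \<in> A \<Longrightarrow> f (c *\<^sub>R x) = c *\<^sub>R f x) \<Longrightarrow> linear_on A B f"
  unfolding linear_on_def by blast

lemma linear_on_mem: "linear_on A B f \<Longrightarrow> x \<in> A \<Longrightarrow> f x \<in> B"
  unfolding linear_on_def by blast

lemma linear_on_add: "linear_on A B f \<Longrightarrow> x \<in> A \<Longrightarrow> y \<in> A \<Longrightarrow> f (x + y) = f x + f y"
  unfolding linear_on_def by blast

lemma linear_on_scale: "linear_on A B f \<Longrightarrow> x \<in> A \<Longrightarrow> f (c *\<^sub>R x) = c *\<^sub>R f x"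
  unfolding linear_on_def by blast

lemma linear_on_0: "subspace A \<Longrightarrow> linear_on A B f \<Longrightarrow> f 0 = 0"
  using linear_on_scale[of A B f 0 0] subspace_0 by auto

lemma linear_on_neg: "subspace A \<Longrightarrow> linear_on A B f \<Longrightarrow> x \<in> A \<Longrightarrow> f (- x) = - f x"
  using linear_on_scale[of A B f x "-1"] by simp

lemma linear_on_diff:
  "subspace A \<Longrightarrow> linear_on A B f \<Longrightarrow> x \<in> A \<Longrightarrow> y \<in> A \<Longrightarrow> f (x - y) = f x - f y"
  using linear_on_add[of A B f x "- y"] linear_on_neg[of A B f y] subspace_neg[of A y] by simp

lemma linear_on_sum:
  assumes A: "subspace A" and f: "linear_on A B f" and S: "finite S" and g: "\<And>i. i \<in> S \<Longrightarrow> g i \<in> A"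
  shows "f (\<Sum>i\<in>S. g i) = (\<Sum>i\<in>S. f (g i))"
  using S g
proof (induction S rule: finite_induct)
  case empty
  then show ?case using linear_on_0[OF A f] by simp
next
  case (insert i S)
  have "(\<Sum>i\<in>S. g i) \<in> A" using insert A subspace_sum[of A S g] by blast
  then show ?case using insert linear_on_add[OF f, of "g i" "\<Sum>i\<in>S. g i"] by simp
qed

lemma linear_on_comp: "linear_on A B f \<Longrightarrow> linear_on B C g \<Longrightarrow> linear_on A C (g \<circ> f)"
  unfolding linear_on_def by simp

lemma linear_on_subset: "linear_on A B f \<Longrightarrow> A' \<subseteq> A \<Longrightarrow> linear_on A' B f"
  unfolding linear_on_def by blast

lemma linear_on_mono: "linear_on A B f \<Longrightarrow> B \<subseteq> B' \<Longrightarrow> linear_on A B' f"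
  unfolding linear_on_def by blast

lemma linear_on_uminus: "subspace B \<Longrightarrow> linear_on A B f \<Longrightarrow> linear_on A B (\<lambda>x. - f x)"
  unfolding linear_on_def by (auto simp: subspace_neg)

lemma linear_on_sum_fun:
  assumes C: "subspace C" and F: "\<And>i. i \<in> S \<Longrightarrow> linear_on A C (F i)"
  shows "linear_on A C (\<lambda>x. \<Sum>i\<in>S. F i x)"
proof (rule linear_onI)
  fix x assume x: "x \<in> A"
  show "(\<Sum>i\<in>S. F i x) \<in> C"
    using F linear_on_mem x by (blast intro: subspace_sum[OF C])
  show "(\<Sum>i\<in>S. F i (x + y)) = (\<Sum>i\<in>S. F i x) + (\<Sum>i\<in>S. F i y)" if y: "y \<in> A" for y
    by (auto intro!: sum.cong simp: sum.distrib[symmetric] linear_on_add[OF F x y])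
  show "(\<Sum>i\<in>S. F i (c *\<^sub>R x)) = c *\<^sub>R (\<Sum>i\<in>S. F i x)" for c
    by (auto intro!: sum.cong simp: scaleR_sum_right linear_on_scale[OF F x])
qed

lemma linear_on_inv_into:
  assumes A: "subspace A" and f: "linear_on A B f" and bij: "bij_betw f A B"
  shows "linear_on B A (inv_into A f)"
proof (rule linear_onI)
  let ?g = "inv_into A f"
  have g: "?g x \<in> A" "f (?g x) = x" if "x \<in> B" for x
    using that bij by (auto simp: bij_betw_def inv_into_into f_inv_into_f)
  have g_eqI: "?g x = y" if "y \<in> A" "f y = x" for x y
    using that bij by (metis bij_betw_def inv_into_f_f)
  show "?g x \<in> A" if "x \<in> B" for x
    using g that by blast
  show "?g (x + y) = ?g x + ?g y" if "x \<in> B" "y \<in> B" for x y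
    using that g linear_on_add[OF f] subspace_add[OF A] by (intro g_eqI) auto
  show "?g (c *\<^sub>R x) = c *\<^sub>R ?g x" if "x \<in> B" for x c
    using that g linear_on_scale[OF f] subspace_scale[OF A] by (intro g_eqI) auto
qed

section \<open>Finite-dimensional subspaces of an inner product space\<close>

definition finite_dim_subspace :: "'v::real_inner set \<Rightarrow> bool" where
  "finite_dim_subspace S \<longleftrightarrow> subspace S \<and> (\<exists>T. finite T \<and> S \<subseteq> span T)"

(* Gram-Schmidt as in orthogonal_extension_aux, which HOL-Analysis states for euclidean_space
   only. *)
lemma orthogonal_extension_finite:
  fixes S :: "'v::real_inner set"
  assumes "finite T" "finite S" "pairwise orthogonal S"
  shows "\<exists>U. finite U \<and> pairwise orthogonal (S \<union> U) \<and> span (S \<union> U) = span (S \<union> T)"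
  using assms
proof (induction arbitrary: S)
  case empty
  then show ?case by (intro exI[of _ "{}"]) simp
next
  case (insert a T)
  have S_orth: "x \<bullet> y = 0" if "x \<noteq> y" "x \<in> S" "y \<in> S" for x y
    using insert that by (simp add: pairwise_def orthogonal_def)
  define a' where "a' = a - (\<Sum>b\<in>S. (b \<bullet> a / (b \<bullet> b)) *\<^sub>R b)"
  have a'_orth: "a' \<bullet> x = 0" if x: "x \<in> S" for x
  proof -
    have "a \<bullet> x = (\<Sum>y\<in>S. if y = x then y \<bullet> a else 0)"
      using insert.prems(1) x by (simp add: inner_commute)
    also have "\<dots> = (\<Sum>b\<in>S. b \<bullet> a * (b \<bullet> x) / (b \<bullet> b))"
      by (rule sum.cong[OF refl]) (use S_orth x in \<open>auto simp: inner_commute\<close>)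
    finally show "a' \<bullet> x = 0"
      unfolding a'_def by (simp add: algebra_simps inner_sum_left)
  qed
  have "pairwise orthogonal (insert a' S)"
    by (rule pairwise_orthogonal_insert[OF insert.prems(2)]) (simp add: orthogonal_def a'_orth)
  then obtain U where U: "finite U" "pairwise orthogonal (insert a' S \<union> U)"
    "span (insert a' S \<union> U) = span (insert a' S \<union> T)"
    using insert.IH[of "insert a' S"] insert.prems(1) by auto
  have "span (S \<union> insert a' U) = span (insert a' (S \<union> T))"
    using U(3) by (simp add: insert_commute)
  also have "\<dots> = span (insert a (S \<union> T))"
    by (simp add: a'_def span_neg span_sum span_base span_mul eq_span_insert_eq)
  finally show ?case
    using U(1,2) by (intro exI[of _ "insert a' U"]) (simp add: insert_commute)
qed

lemma orthogonal_basis_finite_dim_subspace: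
  fixes S :: "'v::real_inner set"
  assumes "finite_dim_subspace S"
  obtains U where "finite U" "pairwise orthogonal U" "0 \<notin> U" "span U = S"
proof -
  obtain T where S: "subspace S" and T: "finite T" "S \<subseteq> span T"
    using assms unfolding finite_dim_subspace_def by blast
  obtain B where B: "B \<subseteq> S" "independent B" "S \<subseteq> span B"
    by (rule maximal_independent_subset[of S])
  have "finite B" using independent_span_bound[OF T(1) B(2)] B(1) T(2) by blast
  then obtain U where U: "finite U" "pairwise orthogonal U" "span U = span B"
    using orthogonal_extension_finite[of B "{}"] by auto
  have "span B = S" using B S span_minimal by (metis span_subspace)
  then have "span (U - {0}) = S" using U(3) by (simp add: span_delete_0)
  moreover have "pairwise orthogonal (U - {0})" using U(2) by (simp add: pairwise_def)
  ultimately show ?thesis using U(1) that[of "U - {0}"] by blast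
qed

lemma inner_representative_unique:
  assumes "z \<in> V" "z' \<in> V" "subspace V" "\<And>x. x \<in> V \<Longrightarrow> inner x z = inner x z'"
  shows "z = z'"
proof -
  have "inner (z - z') z = inner (z - z') z'" using assms subspace_diff by blast
  then have "inner (z - z') (z - z') = 0" by (simp add: inner_diff_right)
  then show ?thesis by simp
qed

lemma riesz_representation_finite_dim:
  fixes \<phi> :: "'v::real_inner \<Rightarrow> real"
  assumes V: "finite_dim_subspace V" and \<phi>: "linear_on V UNIV \<phi>"
  obtains z where "z \<in> V" "\<And>x. x \<in> V \<Longrightarrow> \<phi> x = inner x z"
proof -
  obtain U where U: "finite U" "pairwise orthogonal U" "0 \<notin> U" "span U = V"
    using orthogonal_basis_finite_dim_subspace[OF V] by blast
  have sub: "subspace V" using V unfolding finite_dim_subspace_def by blast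
  have UV: "e \<in> V" if "e \<in> U" for e using that U(4) span_base by blast
  define z where "z = (\<Sum>e\<in>U. (\<phi> e / inner e e) *\<^sub>R e)"
  have zV: "z \<in> V" unfolding z_def using UV by (intro subspace_sum[OF sub] subspace_scale[OF sub])
  have on_basis: "\<phi> e = inner e z" if e: "e \<in> U" for e
  proof -
    have "inner e z = (\<Sum>b\<in>U. if b = e then \<phi> e else 0)"
      unfolding z_def inner_sum_right
    proof (rule sum.cong[OF refl])
      fix b assume b: "b \<in> U"
      have "inner e e \<noteq> 0" using U(3) e by auto
      moreover have "b \<noteq> e \<Longrightarrow> inner e b = 0"
        using U(2) b e by (simp add: pairwise_def orthogonal_def)
      ultimately show "inner e ((\<phi> b / inner b b) *\<^sub>R b) = (if b = e then \<phi> e else 0)"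
        by auto
    qed
    then show ?thesis using U(1) e by simp
  qed
  have "subspace {x. x \<in> V \<and> \<phi> x = inner x z}"
    unfolding subspace_def
    using linear_on_0[OF sub \<phi>] linear_on_add[OF \<phi>] linear_on_scale[OF \<phi>] sub
    by (auto simp: subspace_0 subspace_add subspace_scale inner_add_left)
  then have "x \<in> V \<and> \<phi> x = inner x z" if "x \<in> V" for x
    using span_induct[of x U "\<lambda>x. x \<in> V \<and> \<phi> x = inner x z"] that U(4) UV on_basis by blast
  then show ?thesis using that zV by blast
qed

lemma proj_eqI:
  assumes w: "w \<in> W" and orth: "\<And>u. u \<in> W \<Longrightarrow> inner (s - w) u = 0"
  shows "proj W s = w"
  unfolding proj_def
proof (rule the_equality)
  show "w \<in> W \<and> (\<forall>u\<in>W. inner (s - w) u = 0)" using w orth by blast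
  fix w' assume w': "w' \<in> W \<and> (\<forall>u\<in>W. inner (s - w') u = 0)"
  have "inner (w - w') w = 0" "inner (w - w') w' = 0"
    using orth w' w by (simp_all add: inner_diff_left)
  then have "inner (w - w') (w - w') = 0" by (simp add: inner_diff_right)
  then show "w' = w" by simp
qed

lemma proj_eq_0_iff:
  assumes W: "finite_dim_subspace W"
  shows "proj W s = 0 \<longleftrightarrow> (\<forall>u\<in>W. inner s u = 0)"
proof
  have sub: "subspace W" using W unfolding finite_dim_subspace_def by blast
  have "linear_on W UNIV (inner s)"
    by (rule linear_onI) (simp_all add: inner_add_right)
  then obtain p where p: "p \<in> W" "\<And>u. u \<in> W \<Longrightarrow> inner s u = inner u p"
    using riesz_representation_finite_dim[OF W] by blast
  have "proj W s = p"
    by (rule proj_eqI[OF p(1)]) (metis p(2) inner_commute inner_diff_left diff_self)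
  moreover assume "proj W s = 0"
  ultimately show "\<forall>u\<in>W. inner s u = 0" using p by simp
next
  assume "\<forall>u\<in>W. inner s u = 0"
  moreover have "0 \<in> W" using W subspace_0 unfolding finite_dim_subspace_def by blast
  ultimately show "proj W s = 0" by (intro proj_eqI) auto
qed

lemma adj_inner:
  assumes V: "finite_dim_subspace V" and f: "linear_on V W f"
  shows "adj V W f y \<in> V" and "x \<in> V \<Longrightarrow> inner (f x) y = inner x (adj V W f y)"
proof -
  have sub: "subspace V" using V unfolding finite_dim_subspace_def by blast
  have "linear_on V UNIV (\<lambda>x. inner (f x) y)"
    by (rule linear_onI) (simp_all add: linear_on_add[OF f] linear_on_scale[OF f] inner_add_left)
  then obtain z where z: "z \<in> V" "\<And>x. x \<in> V \<Longrightarrow> inner (f x) y = inner x z"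
    using riesz_representation_finite_dim[OF V] by blast
  have "adj V W f y = z"
    unfolding adj_def
  proof (rule the_equality)
    show "z \<in> V \<and> (\<forall>x\<in>V. inner (f x) y = inner x z)" using z by blast
    show "z' = z" if "z' \<in> V \<and> (\<forall>x\<in>V. inner (f x) y = inner x z')" for z'
      using inner_representative_unique[of z' V z] that z sub by simp
  qed
  then show "adj V W f y \<in> V" and "x \<in> V \<Longrightarrow> inner (f x) y = inner x (adj V W f y)"
    using z by simp_all
qed

lemma proj_adj_comp_diff_eq_0_iff:
  assumes A: "finite_dim_subspace A" and B: "finite_dim_subspace B"
    and K: "finite_dim_subspace K" "K \<subseteq> A"
    and G: "linear_on A B G" and F: "linear_on B A F"
  shows "(\<forall>s\<in>A. proj K (adj A B G (adj B A F s) - s) = 0) \<longleftrightarrow> (\<forall>u\<in>K. F (G u) = u)"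
proof -
  have subA: "subspace A" using A unfolding finite_dim_subspace_def by blast
  have FG: "F (G u) - u \<in> A" if "u \<in> A" for u
    using that linear_on_mem[OF F] linear_on_mem[OF G] subspace_diff[OF subA] by blast
  have transpose: "inner (adj A B G (adj B A F s) - s) u = inner s (F (G u) - u)" if "u \<in> A" for s u
  proof -
    have "inner (adj A B G (adj B A F s)) u = inner (G u) (adj B A F s)"
      using adj_inner(2)[OF A G that, of "adj B A F s"] by (metis inner_commute)
    also have "\<dots> = inner s (F (G u))"
      using adj_inner(2)[OF B F linear_on_mem[OF G that], of s] by (metis inner_commute)
    finally show ?thesis by (simp add: inner_diff_left inner_diff_right inner_commute)
  qed
  have "proj K (adj A B G (adj B A F s) - s) = 0 \<longleftrightarrow> (\<forall>u\<in>K. inner s (F (G u) - u) = 0)" for s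
    unfolding proj_eq_0_iff[OF K(1)]
  proof (rule ball_cong[OF refl])
    show "inner (adj A B G (adj B A F s) - s) u = 0 \<longleftrightarrow> inner s (F (G u) - u) = 0" if "u \<in> K" for u
      using that K(2) transpose[of u s] by auto
  qed
  then have "(\<forall>s\<in>A. proj K (adj A B G (adj B A F s) - s) = 0) \<longleftrightarrow>
        (\<forall>u\<in>K. \<forall>s\<in>A. inner s (F (G u) - u) = 0)"
    by blast
  also have "\<dots> \<longleftrightarrow> (\<forall>u\<in>K. F (G u) = u)"
  proof (rule ball_cong[OF refl])
    fix u assume "u \<in> K"
    then have "F (G u) - u \<in> A" using FG K(2) by blast
    then show "(\<forall>s\<in>A. inner s (F (G u) - u) = 0) \<longleftrightarrow> F (G u) = u"
      using inner_eq_zero_iff[of "F (G u) - u"] by auto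
  qed
  finally show ?thesis .
qed

lemma proj_ker_adj_image_eq_0:
  assumes D: "finite_dim_subspace D" and A: "subspace A" and d: "linear_on D A d" and g: "g \<in> D"
  shows "proj {y \<in> A. adj D A d y = 0} (d g) = 0"
proof (rule proj_eqI)
  have "inner (d (adj D A d 0)) 0 = inner (adj D A d 0) (adj D A d 0)"
    by (rule adj_inner(2)[OF D d adj_inner(1)[OF D d]])
  then have "inner (adj D A d 0) (adj D A d 0) = 0" by simp
  then show "0 \<in> {y \<in> A. adj D A d y = 0}" using subspace_0[OF A] by simp
  show "inner (d g - 0) u = 0" if "u \<in> {y \<in> A. adj D A d y = 0}" for u
    using that adj_inner(2)[OF D d g] by simp
qed

definition cycles :: "('a, 'v::real_vector) bcx \<Rightarrow> int \<Rightarrow> 'v set" where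
  "cycles X n = {z \<in> chsp X n. bd X n z = 0}"

definition boundaries :: "('a, 'v::real_vector) bcx \<Rightarrow> int \<Rightarrow> 'v set" where
  "boundaries X n = bd X (n + 1) ` chsp X (n + 1)"

locale based_cx =
  fixes X :: "('a, 'v::real_inner) bcx"
  assumes based: "based_complex X"
begin

lemma finite_idx: "finite (idx X n)"
  using based unfolding based_complex_def by (elim conjE) simp

lemma idx_negative: "n < 0 \<Longrightarrow> idx X n = {}"
  using based unfolding based_complex_def by (elim conjE) simp

lemma idx_unique: "a \<in> idx X n \<Longrightarrow> a \<in> idx X m \<Longrightarrow> n = m"
  using based unfolding based_complex_def by (elim conjE) blast

lemma cell_finite_span: "a \<in> idx X n \<Longrightarrow> \<exists>B. finite B \<and> cell X a = span B"
  using based unfolding based_complex_def by (elim conjE) blast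

lemma cells_independent:
  assumes "\<And>a. a \<in> idx X n \<Longrightarrow> f a \<in> cell X a" "(\<Sum>a\<in>idx X n. f a) = 0" "a \<in> idx X n"
  shows "f a = 0"
proof -
  have "\<forall>n f. (\<forall>a\<in>idx X n. f a \<in> cell X a) \<and> (\<Sum>a\<in>idx X n. f a) = 0 \<longrightarrow> (\<forall>a\<in>idx X n. f a = 0)"
    using based unfolding based_complex_def by (elim conjE) assumption
  then show ?thesis using assms by blast
qed

lemma bd_add: "x \<in> chsp X n \<Longrightarrow> y \<in> chsp X n \<Longrightarrow> bd X n (x + y) = bd X n x + bd X n y"
  using based unfolding based_complex_def by (elim conjE) simp

lemma bd_scale: "x \<in> chsp X n \<Longrightarrow> bd X n (c *\<^sub>R x) = c *\<^sub>R bd X n x"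
  using based unfolding based_complex_def by (elim conjE) simp

lemma bd_in_chsp: "x \<in> chsp X n \<Longrightarrow> bd X n x \<in> chsp X (n - 1)"
  using based unfolding based_complex_def by (elim conjE) simp

lemma bd_bd: "x \<in> chsp X n \<Longrightarrow> bd X (n - 1) (bd X n x) = 0"
  using based unfolding based_complex_def by (elim conjE) simp

lemma deg_eq: "a \<in> idx X n \<Longrightarrow> deg X a = n"
  unfolding deg_def using idx_unique by blast

lemma cell_subspace: "a \<in> idx X n \<Longrightarrow> subspace (cell X a)"
  using cell_finite_span by fastforce

lemma cell_0: "a \<in> idx X n \<Longrightarrow> 0 \<in> cell X a"
  using cell_subspace subspace_0 by blast

lemma cell_sum: "a \<in> idx X n \<Longrightarrow> (\<And>i. i \<in> S \<Longrightarrow> f i \<in> cell X a) \<Longrightarrow> (\<Sum>i\<in>S. f i) \<in> cell X a"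
  using cell_subspace[of a n] subspace_sum[of "cell X a" S f] by blast

lemma chspI: "(\<And>a. a \<in> idx X n \<Longrightarrow> f a \<in> cell X a) \<Longrightarrow> (\<Sum>a\<in>idx X n. f a) \<in> chsp X n"
  unfolding chsp_def by blast

lemma chspE:
  assumes "s \<in> chsp X n"
  obtains f where "\<And>a. a \<in> idx X n \<Longrightarrow> f a \<in> cell X a" "s = (\<Sum>a\<in>idx X n. f a)"
  using assms unfolding chsp_def by blast

lemma comp_eq:
  assumes f: "\<And>a. a \<in> idx X n \<Longrightarrow> f a \<in> cell X a" and s: "s = (\<Sum>a\<in>idx X n. f a)"
  shows "comp X n b s = (if b \<in> idx X n then f b else 0)"
proof -
  let ?f = "\<lambda>a. if a \<in> idx X n then f a else 0"
  let ?P = "\<lambda>g. (\<forall>a\<in>idx X n. g a \<in> cell X a) \<and> (\<forall>a. a \<notin> idx X n \<longrightarrow> g a = 0)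
                \<and> s = (\<Sum>a\<in>idx X n. g a)"
  have "g a = ?f a" if g: "?P g" for g a
  proof (cases "a \<in> idx X n")
    case True
    have "(\<Sum>a\<in>idx X n. g a - f a) = 0"
      using g s by (simp add: sum_subtractf)
    then have "g a - f a = 0"
      using cells_independent[of n "\<lambda>a. g a - f a" a] g f True cell_subspace subspace_diff by blast
    then show ?thesis using True by simp
  qed (use g in auto)
  then have "(THE g. ?P g) = ?f"
    using f s by (intro the_equality) auto
  then show ?thesis unfolding comp_def by simp
qed

lemma comp_chsp:
  assumes "s \<in> chsp X n"
  obtains f where "\<And>a. a \<in> idx X n \<Longrightarrow> f a \<in> cell X a" "s = (\<Sum>a\<in>idx X n. f a)"
    "\<And>b. comp X n b s = (if b \<in> idx X n then f b else 0)"
proof -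
  obtain f where f: "\<And>a. a \<in> idx X n \<Longrightarrow> f a \<in> cell X a" "s = (\<Sum>a\<in>idx X n. f a)"
    using assms by (blast elim: chspE)
  then show ?thesis using that comp_eq[OF f] by blast
qed

lemma comp_in_cell: "s \<in> chsp X n \<Longrightarrow> b \<in> idx X n \<Longrightarrow> comp X n b s \<in> cell X b"
  by (elim comp_chsp) simp

lemma comp_outside: "s \<in> chsp X n \<Longrightarrow> b \<notin> idx X n \<Longrightarrow> comp X n b s = 0"
  by (elim comp_chsp) simp

lemma chsp_decomposition: "s \<in> chsp X n \<Longrightarrow> s = (\<Sum>a\<in>idx X n. comp X n a s)"
  by (elim comp_chsp) simp

lemma chsp_eqI:
  "x \<in> chsp X n \<Longrightarrow> y \<in> chsp X n \<Longrightarrow> (\<And>a. a \<in> idx X n \<Longrightarrow> comp X n a x = comp X n a y) \<Longrightarrow> x = y"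
  using chsp_decomposition[of x n] chsp_decomposition[of y n]
    by (metis (mono_tags, lifting) sum.cong)

lemma chsp_subspace: "subspace (chsp X n)"
  unfolding subspace_def
proof (intro conjI ballI allI)
  show "0 \<in> chsp X n" using chspI[of n "\<lambda>a. 0"] cell_0 by auto
  show "x + y \<in> chsp X n" if x: "x \<in> chsp X n" and y: "y \<in> chsp X n" for x y
  proof -
    obtain f where f: "\<And>a. a \<in> idx X n \<Longrightarrow> f a \<in> cell X a" "x = (\<Sum>a\<in>idx X n. f a)"
      using x by (blast elim: chspE)
    obtain g where g: "\<And>a. a \<in> idx X n \<Longrightarrow> g a \<in> cell X a" "y = (\<Sum>a\<in>idx X n. g a)"
      using y by (blast elim: chspE)
    have "(\<Sum>a\<in>idx X n. f a + g a) \<in> chsp X n"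
      by (rule chspI) (use f g cell_subspace subspace_add in blast)
    then show ?thesis using f g by (simp add: sum.distrib)
  qed
  show "c *\<^sub>R x \<in> chsp X n" if x: "x \<in> chsp X n" for c x
  proof -
    obtain f where f: "\<And>a. a \<in> idx X n \<Longrightarrow> f a \<in> cell X a" "x = (\<Sum>a\<in>idx X n. f a)"
      using x by (blast elim: chspE)
    have "(\<Sum>a\<in>idx X n. c *\<^sub>R f a) \<in> chsp X n"
      by (rule chspI) (use f cell_subspace subspace_scale in blast)
    then show ?thesis using f by (simp add: scaleR_sum_right)
  qed
qed

lemma chsp_0: "0 \<in> chsp X n"
  using chsp_subspace subspace_0 by blast

lemma chsp_diff: "x \<in> chsp X n \<Longrightarrow> y \<in> chsp X n \<Longrightarrow> x - y \<in> chsp X n"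
  using chsp_subspace subspace_diff by blast

lemma sum_cells_in_chsp:
  assumes S: "S \<subseteq> idx X n" and F: "\<And>b. b \<in> S \<Longrightarrow> F b \<in> cell X b"
  shows "(\<Sum>b\<in>S. F b) \<in> chsp X n"
    and "comp X n b' (\<Sum>b\<in>S. F b) = (if b' \<in> S then F b' else 0)"
proof -
  let ?f = "\<lambda>b. if b \<in> S then F b else 0"
  have e: "(\<Sum>b\<in>S. F b) = (\<Sum>b\<in>idx X n. ?f b)"
    using S finite_idx by (simp add: sum.inter_restrict[symmetric] Int_absorb1)
  have f: "\<And>b. b \<in> idx X n \<Longrightarrow> ?f b \<in> cell X b" using F cell_0 by auto
  show "(\<Sum>b\<in>S. F b) \<in> chsp X n" unfolding e by (rule chspI[OF f])
  show "comp X n b' (\<Sum>b\<in>S. F b) = (if b' \<in> S then F b' else 0)"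
    unfolding e using comp_eq[OF f refl, where b=b'] S by auto
qed

lemma cell_in_chsp: "a \<in> idx X n \<Longrightarrow> x \<in> cell X a \<Longrightarrow> x \<in> chsp X n"
  using sum_cells_in_chsp(1)[of "{a}" n "\<lambda>_. x"] by simp

lemma comp_linear: "b \<in> idx X n \<Longrightarrow> linear_on (chsp X n) (cell X b) (comp X n b)"
proof (rule linear_onI)
  assume b: "b \<in> idx X n"
  fix x assume x: "x \<in> chsp X n"
  show "comp X n b x \<in> cell X b" by (rule comp_in_cell[OF x b])
  show "comp X n b (x + y) = comp X n b x + comp X n b y" if y: "y \<in> chsp X n" for y
  proof -
    have "comp X n b (\<Sum>a\<in>idx X n. comp X n a x + comp X n a y) = comp X n b x + comp X n b y"
      using comp_eq[where f="\<lambda>a. comp X n a x + comp X n a y", OF _ refl] b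
      by (simp add: x y comp_in_cell cell_subspace subspace_add)
    then show ?thesis using chsp_decomposition[OF x] chsp_decomposition[OF y]
      by (simp add: sum.distrib)
  qed
  show "comp X n b (c *\<^sub>R x) = c *\<^sub>R comp X n b x" for c
  proof -
    have "comp X n b (\<Sum>a\<in>idx X n. c *\<^sub>R comp X n a x) = c *\<^sub>R comp X n b x"
      using comp_eq[where f="\<lambda>a. c *\<^sub>R comp X n a x", OF _ refl] b
      by (simp add: x comp_in_cell cell_subspace subspace_scale)
    then show ?thesis using chsp_decomposition[OF x] by (simp add: scaleR_sum_right[symmetric])
  qed
qed

lemma comp_diff: "x \<in> chsp X n \<Longrightarrow> y \<in> chsp X n \<Longrightarrow> comp X n b (x - y) = comp X n b x - comp X n b y"
  by (cases "b \<in> idx X n")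
    (simp_all add: linear_on_diff[OF chsp_subspace comp_linear] comp_outside chsp_diff)

lemma comp_0: "comp X n b 0 = 0"
  using comp_diff[OF chsp_0 chsp_0] by simp

lemma comp_sum:
  "finite S \<Longrightarrow> (\<And>i. i \<in> S \<Longrightarrow> f i \<in> chsp X n) \<Longrightarrow> comp X n b (\<Sum>i\<in>S. f i) = (\<Sum>i\<in>S. comp X n b (f i))"
  by (cases "b \<in> idx X n")
    (simp_all add: linear_on_sum[OF chsp_subspace comp_linear] comp_outside chsp_subspace
      subspace_sum)

lemma bd_linear: "linear_on (chsp X n) (chsp X (n - 1)) (bd X n)"
  by (rule linear_onI) (simp_all add: bd_in_chsp bd_add bd_scale)

lemma bd_0: "bd X n 0 = 0"
  by (rule linear_on_0[OF chsp_subspace bd_linear])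

lemma bd_diff: "x \<in> chsp X n \<Longrightarrow> y \<in> chsp X n \<Longrightarrow> bd X n (x - y) = bd X n x - bd X n y"
  by (rule linear_on_diff[OF chsp_subspace bd_linear])

lemma comp_bd:
  assumes w: "w \<in> chsp X n"
  shows "comp X (n - 1) t (bd X n w) = (\<Sum>\<beta>\<in>idx X n. dent X t \<beta> (comp X n \<beta> w))"
proof -
  have cw: "comp X n \<beta> w \<in> chsp X n" if "\<beta> \<in> idx X n" for \<beta>
    using comp_in_cell cell_in_chsp w that by blast
  have "bd X n (\<Sum>\<beta>\<in>idx X n. comp X n \<beta> w) = (\<Sum>\<beta>\<in>idx X n. bd X n (comp X n \<beta> w))"
    by (rule linear_on_sum[OF chsp_subspace bd_linear finite_idx cw])
  then have "bd X n w = (\<Sum>\<beta>\<in>idx X n. bd X n (comp X n \<beta> w))"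
    using chsp_decomposition[OF w] by simp
  then have "comp X (n - 1) t (bd X n w) = (\<Sum>\<beta>\<in>idx X n. comp X (n - 1) t (bd X n (comp X n \<beta> w)))"
    using comp_sum[OF finite_idx] bd_in_chsp cw by simp
  then show ?thesis by (simp add: dent_def deg_eq)
qed

lemma bd_cell_eq_sum_dent:
  assumes a: "a \<in> idx X (n + 1)" and x: "x \<in> cell X a"
  shows "bd X (n + 1) x = (\<Sum>\<delta>\<in>idx X n. dent X \<delta> a x)"
proof -
  have "bd X (n + 1) x \<in> chsp X n" using bd_in_chsp[OF cell_in_chsp[OF a x]] by simp
  then have "bd X (n + 1) x = (\<Sum>\<delta>\<in>idx X n. comp X n \<delta> (bd X (n + 1) x))"
    by (rule chsp_decomposition)
  also have "\<dots> = (\<Sum>\<delta>\<in>idx X n. dent X \<delta> a x)"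
    by (simp add: dent_def deg_eq[OF a])
  finally show ?thesis .
qed

lemma dent_linear:
  assumes s: "s \<in> idx X n" and t: "t \<in> idx X (n - 1)"
  shows "linear_on (cell X s) (cell X t) (dent X t s)"
proof -
  have "dent X t s = comp X (n - 1) t \<circ> bd X n"
    using deg_eq[OF s] by (simp add: dent_def fun_eq_iff)
  moreover have "linear_on (cell X s) (chsp X (n - 1)) (bd X n)"
    using linear_on_subset[OF bd_linear] cell_in_chsp[OF s] by blast
  ultimately show ?thesis using linear_on_comp[OF _ comp_linear[OF t]] by simp
qed

lemma dent_outside: "s \<in> idx X n \<Longrightarrow> t \<notin> idx X (n - 1) \<Longrightarrow> x \<in> cell X s \<Longrightarrow> dent X t s x = 0"
proof -
  assume s: "s \<in> idx X n" and t: "t \<notin> idx X (n - 1)" and x: "x \<in> cell X s"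
  have d: "deg X s = n" using s deg_eq by blast
  show ?thesis unfolding dent_def d using comp_outside[OF bd_in_chsp[OF cell_in_chsp[OF s x]] t] .
qed

lemma dent_no_edge: "s \<in> idx X n \<Longrightarrow> \<not> edge X s t \<Longrightarrow> x \<in> cell X s \<Longrightarrow> dent X t s x = 0"
proof -
  assume s: "s \<in> idx X n" and ne: "\<not> edge X s t" and x: "x \<in> cell X s"
  show ?thesis
  proof (cases "t \<in> idx X (n - 1)")
    case True then show ?thesis using ne s x unfolding edge_def by blast
  next
    case False then show ?thesis using dent_outside s x by blast
  qed
qed

lemma boundaries_subspace: "subspace (boundaries X n)"
  unfolding boundaries_def subspace_def
proof (intro conjI ballI allI)
  show "0 \<in> bd X (n + 1) ` chsp X (n + 1)"
    using bd_0 chsp_0 by (metis image_eqI)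
  show "x + y \<in> bd X (n + 1) ` chsp X (n + 1)"
    if "x \<in> bd X (n + 1) ` chsp X (n + 1)" "y \<in> bd X (n + 1) ` chsp X (n + 1)" for x y
    using that bd_add chsp_subspace subspace_add by (smt (verit) image_iff)
  show "c *\<^sub>R x \<in> bd X (n + 1) ` chsp X (n + 1)" if "x \<in> bd X (n + 1) ` chsp X (n + 1)" for c x
    using that bd_scale chsp_subspace subspace_scale by (smt (verit) image_iff)
qed

lemma chsp_finite_dim: "finite_dim_subspace (chsp X n)"
proof -
  obtain B where B: "\<forall>a\<in>idx X n. finite (B a) \<and> cell X a = span (B a)"
    using cell_finite_span by metis
  let ?T = "\<Union>a\<in>idx X n. B a"
  have "x \<in> span ?T" if x: "x \<in> chsp X n" for x
  proof -
    obtain f where f: "\<And>a. a \<in> idx X n \<Longrightarrow> f a \<in> cell X a" "x = (\<Sum>a\<in>idx X n. f a)"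
      using x by (blast elim: chspE)
    have "f a \<in> span ?T" if "a \<in> idx X n" for a
      using f(1)[OF that] B that span_mono[of "B a" ?T] by blast
    then show ?thesis unfolding f(2) by (rule span_sum)
  qed
  moreover have "finite ?T" using B finite_idx by blast
  ultimately show ?thesis unfolding finite_dim_subspace_def using chsp_subspace by blast
qed

lemma cycles_finite_dim: "finite_dim_subspace (cycles X n)"
proof -
  have "subspace (cycles X n)"
    unfolding cycles_def subspace_def using chsp_subspace bd_0 bd_add bd_scale
    by (simp add: subspace_0 subspace_add subspace_scale)
  then show ?thesis
    using chsp_finite_dim unfolding finite_dim_subspace_def cycles_def by blast
qed

end

section \<open>The reversed graph of a Morse matching\<close>

lemma chain_nth_trancl:
  assumes "\<forall>i. Suc i < length p \<longrightarrow> (p ! i, p ! Suc i) \<in> R"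
  shows "i < j \<Longrightarrow> j < length p \<Longrightarrow> (p ! i, p ! j) \<in> R\<^sup>+"
proof (induction j)
  case 0 then show ?case by simp
next
  case (Suc j)
  have st: "(p ! j, p ! Suc j) \<in> R" using assms Suc.prems by blast
  show ?case
  proof (cases "i = j")
    case True then show ?thesis using st by auto
  next
    case False
    then have "(p ! i, p ! j) \<in> R\<^sup>+" using Suc by simp
    then show ?thesis using st by (meson trancl.trancl_into_trancl)
  qed
qed

locale morse_cx = based_cx X for X :: "('a, 'v::real_inner) bcx" +
  fixes M :: "('a \<times> 'a) set"
  assumes matching: "morse_matching X M"
begin

abbreviation r :: "('a \<times> 'a) set" where
  "r \<equiv> rgraph X M"

lemma matched_edge: "(a, b) \<in> M \<Longrightarrow> edge X a b"
  using matching unfolding morse_matching_def by blast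

lemma matched_disjoint: "e1 \<in> M \<Longrightarrow> e2 \<in> M \<Longrightarrow> e1 \<noteq> e2 \<Longrightarrow> {fst e1, snd e1} \<inter> {fst e2, snd e2} = {}"
  using matching unfolding morse_matching_def by blast

lemma matched_bij: "(a, b) \<in> M \<Longrightarrow> bij_betw (dent X b a) (cell X a) (cell X b)"
  using matching unfolding morse_matching_def by blast

lemma rgraph_partial_order: "partial_order_on (idx X n) (Restr (r\<^sup>*) (idx X n))"
  using matching unfolding morse_matching_def by blast

lemma rgraph_antisym: "u \<in> idx X n \<Longrightarrow> v \<in> idx X n \<Longrightarrow> (u, v) \<in> r\<^sup>* \<Longrightarrow> (v, u) \<in> r\<^sup>* \<Longrightarrow> u = v"
  using rgraph_partial_order[of n] unfolding partial_order_on_def antisym_def by blast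

lemma edge_deg: "edge X a b \<Longrightarrow> a \<in> idx X (deg X a) \<and> b \<in> idx X (deg X a - 1) \<and> deg X b = deg X a - 1"
  unfolding edge_def using deg_eq by blast

lemma matched_deg: "(a, b) \<in> M \<Longrightarrow>
   a \<in> idx X (deg X a) \<and> b \<in> idx X (deg X a - 1) \<and> deg X b = deg X a - 1"
  using matched_edge edge_deg by blast

lemma matched_lower_unique: "(a, b) \<in> M \<Longrightarrow> (a, b') \<in> M \<Longrightarrow> b = b'"
  using matched_disjoint[of "(a,b)" "(a,b')"] by auto

lemma matched_upper_unique: "(a, b) \<in> M \<Longrightarrow> (a', b) \<in> M \<Longrightarrow> a = a'"
  using matched_disjoint[of "(a,b)" "(a',b)"] by auto

lemma matched_neq: "(a, b) \<in> M \<Longrightarrow> a \<noteq> b"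
  using matched_deg by fastforce

lemma matched_upper_not_lower: "(a, b) \<in> M \<Longrightarrow> (c, a) \<notin> M"
proof
  assume ab: "(a, b) \<in> M" and ca: "(c, a) \<in> M"
  show False
  proof (cases "(a, b) = (c, a)")
    case True then show ?thesis using matched_neq ab by auto
  next
    case False then show ?thesis using matched_disjoint[OF ab ca] by auto
  qed
qed

lemma matched_lower_not_upper: "(a, b) \<in> M \<Longrightarrow> (b, c) \<notin> M"
  using matched_upper_not_lower by blast

lemma crit_iff: "c \<in> crit M \<longleftrightarrow> (\<forall>b. (c, b) \<notin> M \<and> (b, c) \<notin> M)"
  unfolding crit_def by simp

lemma rgraph_cases: "(u, v) \<in> r \<Longrightarrow> (edge X u v \<and> (u, v) \<notin> M) \<or> (v, u) \<in> M"
  unfolding rgraph_def by blast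

lemma rgraph_downI: "edge X u v \<Longrightarrow> (u, v) \<notin> M \<Longrightarrow> (u, v) \<in> r"
  unfolding rgraph_def by blast

lemma rgraph_upI: "(v, u) \<in> M \<Longrightarrow> (u, v) \<in> r"
  unfolding rgraph_def by blast

lemma rgraph_deg: "(u, v) \<in> r \<Longrightarrow> u \<in> idx X (deg X u) \<and> v \<in> idx X (deg X v) \<and>
   ((deg X v = deg X u - 1 \<and> edge X u v \<and> (u, v) \<notin> M \<and> (v, u) \<notin> M) \<or>
    (deg X v = deg X u + 1 \<and> (v, u) \<in> M))"
proof -
  assume "(u, v) \<in> r"
  then consider "edge X u v" "(u, v) \<notin> M" | "(v, u) \<in> M" using rgraph_cases by blast
  then show ?thesis
  proof cases
    case 1
    have e: "u \<in> idx X (deg X u) \<and> v \<in> idx X (deg X u - 1) \<and> deg X v = deg X u - 1"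
      using edge_deg[OF 1(1)] .
    have "(v, u) \<notin> M"
    proof
      assume "(v, u) \<in> M"
      then have "deg X u = deg X v - 1" using matched_deg by blast
      then show False using e by simp
    qed
    then show ?thesis using 1 e by simp
  next
    case 2 then show ?thesis using matched_deg[OF 2] by auto
  qed
qed

(* Bounds the degree of every cell reachable from u: only a lower partner can step up, and it
   lands on an upper partner, which cannot step up again. *)
definition height :: "'a \<Rightarrow> int" where
  "height u = deg X u + (if \<exists>a. (a, u) \<in> M then 1 else 0)"

lemma deg_le_height: "deg X u \<le> height u"
  unfolding height_def by auto

lemma height_le: "height u \<le> deg X u + 1"
  unfolding height_def by simp

lemma height_not_lower: "\<not> (\<exists>a. (a, u) \<in> M) \<Longrightarrow> height u = deg X u"
  unfolding height_def by simp

lemma height_step: "(u, v) \<in> r \<Longrightarrow> height v \<le> height u"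
proof -
  assume uv: "(u, v) \<in> r"
  from rgraph_deg[OF uv] consider "deg X v = deg X u - 1" | "deg X v = deg X u + 1" "(v, u) \<in> M"
    by blast
  then show ?thesis
  proof cases
    case 1 then show ?thesis unfolding height_def by auto
  next
    case 2
    have "\<not> (\<exists>a. (a, v) \<in> M)" using matched_upper_not_lower[OF 2(2)] by blast
    then show ?thesis using 2 unfolding height_def by auto
  qed
qed

lemma height_mono: "(u, v) \<in> r\<^sup>* \<Longrightarrow> height v \<le> height u"
  proof (induction rule: rtrancl_induct)
  case base then show ?case by simp
next
  case (step y z) then show ?case using height_step[OF step(2)] by linarith
qed

lemma reach_in_idx: "(u, v) \<in> r\<^sup>+ \<Longrightarrow> v \<in> idx X (deg X v)"
  by (erule tranclE) (use rgraph_deg in blast)+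

lemma reach_deg_le_height: "(u, v) \<in> r\<^sup>* \<Longrightarrow> deg X v \<le> height u"
  using height_mono deg_le_height order_trans by blast

lemma trancl_deg_less_or_via_matched: "(u, v) \<in> r\<^sup>+ \<Longrightarrow>
   deg X v < deg X u \<or> (\<exists>p q. (q, p) \<in> M \<and> (u, p) \<in> r\<^sup>* \<and> (q, v) \<in> r\<^sup>*)"
proof (induction rule: trancl_induct)
  case (base y)
  from rgraph_deg[OF base] show ?case by auto
next
  case (step y z)
  from rgraph_deg[OF step(2)] consider "deg X z = deg X y - 1" | "(z, y) \<in> M" by blast
  then show ?case
  proof cases
    case 1
    from step(3) show ?thesis
    proof
      assume "deg X y < deg X u" then show ?thesis using 1 by auto
    next
      assume "\<exists>p q. (q, p) \<in> M \<and> (u, p) \<in> r\<^sup>* \<and> (q, y) \<in> r\<^sup>*"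
      then obtain p q where "(q, p) \<in> M" "(u, p) \<in> r\<^sup>*" "(q, y) \<in> r\<^sup>*" by blast
      then show ?thesis using step(2) by (meson rtrancl.rtrancl_into_rtrancl)
    qed
  next
    case 2
    have "(u, y) \<in> r\<^sup>*" using step(1) by auto
    then show ?thesis using 2 by blast
  qed
qed

(* A cycle must climb some reversed matched edge p \<rightarrow> q; the next step q \<rightarrow> y goes down into the
   degree of p, and p, y reach each other, contradicting antisymmetry within that degree. *)
lemma rgraph_acyclic: "(x, x) \<notin> r\<^sup>+"
proof
  assume cyc: "(x, x) \<in> r\<^sup>+"
  from trancl_deg_less_or_via_matched[OF cyc] obtain p q
    where qp: "(q, p) \<in> M" "(x, p) \<in> r\<^sup>*" "(q, x) \<in> r\<^sup>*" by auto
  have "(q, p) \<in> r\<^sup>*" using qp(3) qp(2) by (rule rtrancl_trans)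
  moreover have "q \<noteq> p" using matched_neq[OF qp(1)] .
  ultimately have "(q, p) \<in> r\<^sup>+" by (simp add: rtrancl_eq_or_trancl)
  then obtain y where qy: "(q, y) \<in> r" and yp: "(y, p) \<in> r\<^sup>*"
  proof (rule converse_tranclE)
    assume "(q, p) \<in> r" then show ?thesis by (rule that) simp
  next
    fix c assume "(q, c) \<in> r" "(c, p) \<in> r\<^sup>+"
    then show ?thesis by (intro that[of c]) (simp_all add: trancl_into_rtrancl)
  qed
  from rgraph_deg[OF qy] have "(deg X y = deg X q - 1 \<and> (q, y) \<notin> M) \<or> (y, q) \<in> M" by blast
  then show False
  proof
    assume "(y, q) \<in> M" then show False using matched_upper_not_lower[OF qp(1)] by blast
  next
    assume 1: "deg X y = deg X q - 1 \<and> (q, y) \<notin> M"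
    have yne: "y \<noteq> p" using 1 qp(1) by blast
    have pq: "(p, q) \<in> r" using rgraph_upI[OF qp(1)] .
    have "(p, y) \<in> r\<^sup>*" using pq qy by simp
    moreover have "y \<in> idx X (deg X p)" "p \<in> idx X (deg X p)"
      using rgraph_deg[OF qy] matched_deg[OF qp(1)] 1 by auto
    ultimately have "y = p" using rgraph_antisym[of y "deg X p" p] yp by blast
    then show False using yne by simp
  qed
qed

lemma paths_iff:
  "p \<in> paths X M a b \<longleftrightarrow> p \<noteq> [] \<and> hd p = a \<and> last p = b \<and> successively (\<lambda>x y. (x, y) \<in> r) p"
  by (simp add: paths_def successively_conv_nth)

lemma paths_step: "p \<in> paths X M a b \<Longrightarrow> \<forall>i. Suc i < length p \<longrightarrow> (p ! i, p ! Suc i) \<in> r"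
  unfolding paths_def by blast

lemma paths_distinct: "p \<in> paths X M a b \<Longrightarrow> distinct p"
proof -
  assume p: "p \<in> paths X M a b"
  have ne: "p ! i \<noteq> p ! j" if "i < j" "j < length p" for i j
  proof
    assume eq: "p ! i = p ! j"
    have "(p ! i, p ! j) \<in> r\<^sup>+" by (rule chain_nth_trancl[OF paths_step[OF p] that])
    then have "(p ! i, p ! i) \<in> r\<^sup>+" by (simp only: eq)
    then show False using rgraph_acyclic[of "p ! i"] by simp
  qed
  show ?thesis unfolding distinct_conv_nth
  proof (intro allI impI)
    fix i j assume h: "i < length p" "j < length p" "i \<noteq> j"
    show "p ! i \<noteq> p ! j"
    proof (cases "i < j")
      case True show ?thesis by (rule ne[OF True h(2)])
    next
      case False then have "j < i" using h(3) by simp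
      then show ?thesis using ne[OF _ h(1), of j] by simp
    qed
  qed
qed

lemma paths_nth_reach: "p \<in> paths X M a b \<Longrightarrow> k < length p \<Longrightarrow> (a, p ! k) \<in> r\<^sup>*"
proof -
  assume p: "p \<in> paths X M a b" and k: "k < length p"
  have "p \<noteq> []" "hd p = a" using p unfolding paths_def by auto
  then have a: "p ! 0 = a" by (simp add: hd_conv_nth[symmetric])
  show ?thesis
  proof (cases "k = 0")
    case True then show ?thesis using a by simp
  next
    case False then show ?thesis using chain_nth_trancl[OF paths_step[OF p], of 0 k] a k by auto
  qed
qed

lemma paths_reach: "p \<in> paths X M a b \<Longrightarrow> (a, b) \<in> r\<^sup>*"
proof -
  assume p: "p \<in> paths X M a b"
  then have "p \<noteq> []" "last p = b" unfolding paths_def by auto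
  then have "p ! (length p - 1) = b" by (simp add: last_conv_nth)
  then show ?thesis using paths_nth_reach[OF p, of "length p - 1"] \<open>p \<noteq> []\<close> by simp
qed

lemma finite_reach: "finite {v. (a, v) \<in> r\<^sup>*}"
proof -
  have "{v. (a, v) \<in> r\<^sup>*} \<subseteq> insert a (\<Union>k\<in>{0..height a}. idx X k)"
  proof
    fix v assume "v \<in> {v. (a, v) \<in> r\<^sup>*}"
    then have av: "(a, v) \<in> r\<^sup>*" by simp
    show "v \<in> insert a (\<Union>k\<in>{0..height a}. idx X k)"
    proof (cases "v = a")
      case False
      then have "(a, v) \<in> r\<^sup>+" using av by (simp add: rtrancl_eq_or_trancl)
      then have v: "v \<in> idx X (deg X v)" using reach_in_idx by blast
      then have "0 \<le> deg X v" using idx_negative by (metis empty_iff not_le)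
      moreover have "deg X v \<le> height a" using reach_deg_le_height[OF av] .
      ultimately show ?thesis using v by auto
    qed simp
  qed
  moreover have "finite (insert a (\<Union>k\<in>{0..height a}. idx X k))" using finite_idx by simp
  ultimately show ?thesis by (rule finite_subset)
qed

lemma finite_paths: "finite (paths X M a b)"
proof -
  let ?R = "{v. (a, v) \<in> r\<^sup>*}"
  have "paths X M a b \<subseteq> {xs. set xs \<subseteq> ?R \<and> length xs \<le> card ?R}"
  proof
    fix p assume p: "p \<in> paths X M a b"
    have s: "set p \<subseteq> ?R" using paths_nth_reach[OF p] by (auto simp: in_set_conv_nth)
    have "length p = card (set p)" using paths_distinct[OF p] by (simp add: distinct_card)
    also have "\<dots> \<le> card ?R" using s finite_reach by (simp add: card_mono)
    finally show "p \<in> {xs. set xs \<subseteq> ?R \<and> length xs \<le> card ?R}" using s by simp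
  qed
  then show ?thesis using finite_lists_length_le[OF finite_reach] finite_subset by blast
qed

lemma pathmap_snoc: "q \<noteq> [] \<Longrightarrow> pathmap X M (q @ [b]) = stepmap X M (last q) b \<circ> pathmap X M q"
proof (induction q)
  case Nil then show ?case by simp
next
  case (Cons x q)
  show ?case
  proof (cases q)
    case Nil then show ?thesis by simp
  next
    case (Cons y q')
    then show ?thesis using Cons.IH by (simp add: fun_eq_iff)
  qed
qed

lemma paths_refl: "paths X M a a = {[a]}"
proof
  show "{[a]} \<subseteq> paths X M a a" by (simp add: paths_iff)
  show "paths X M a a \<subseteq> {[a]}"
  proof
    fix p assume p: "p \<in> paths X M a a"
    then obtain ys where ys: "p = ys @ [a]" by (cases p rule: rev_cases) (auto simp: paths_iff)
    have "ys = []" using paths_distinct[OF p] p ys by (cases ys) (auto simp: paths_iff)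
    then show "p \<in> {[a]}" using ys by simp
  qed
qed

lemma Gamma_refl: "Gamma X M a a x = x"
  unfolding Gamma_def paths_refl by simp

lemma Gamma_unreachable: "(a, b) \<notin> r\<^sup>* \<Longrightarrow> Gamma X M b a x = 0"
proof -
  assume "(a, b) \<notin> r\<^sup>*"
  then have "paths X M a b = {}" using paths_reach by blast
  then show ?thesis unfolding Gamma_def by simp
qed

lemma stepmap_linear: "(s, t) \<in> r \<Longrightarrow> linear_on (cell X s) (cell X t) (stepmap X M s t)"
proof -
  assume st: "(s, t) \<in> r"
  from rgraph_deg[OF st] consider "deg X t = deg X s - 1" "(t, s) \<notin> M" | "(t, s) \<in> M" by blast
  then show ?thesis
  proof cases
    case 1
    then have s: "s \<in> idx X (deg X s)" and t: "t \<in> idx X (deg X s - 1)"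
      using rgraph_deg[OF st] by auto
    have "stepmap X M s t = dent X t s" using 1 unfolding stepmap_def by simp
    then show ?thesis using dent_linear[OF s t] by simp
  next
    case 2
    have sm: "stepmap X M s t = (\<lambda>x. - inv_into (cell X t) (dent X s t) x)"
      unfolding stepmap_def using 2 by simp
    have tl: "linear_on (cell X t) (cell X s) (dent X s t)"
      using dent_linear matched_deg[OF 2] by blast
    have "linear_on (cell X s) (cell X t) (inv_into (cell X t) (dent X s t))"
      by (rule linear_on_inv_into[OF _ tl matched_bij[OF 2]])
        (use cell_subspace matched_deg[OF 2] in blast)
    then show ?thesis unfolding sm
      by (rule linear_on_uminus[rotated]) (use cell_subspace matched_deg[OF 2] in blast)
  qed
qed

lemma pathmap_linear_aux:
  "p \<noteq> [] \<Longrightarrow> (\<forall>i. Suc i < length p \<longrightarrow> (p ! i, p ! Suc i) \<in> r) \<Longrightarrow>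
   linear_on (cell X (hd p)) (cell X (last p)) (pathmap X M p)"
proof (induction p)
  case Nil then show ?case by simp
next
  case (Cons s q)
  show ?case
  proof (cases q)
    case Nil then show ?thesis by (simp add: linear_on_def)
  next
    case (Cons t q')
    have st: "(s, t) \<in> r" using Cons.prems(2) Cons by force
    have ch: "\<forall>i. Suc i < length q \<longrightarrow> (q ! i, q ! Suc i) \<in> r"
      using Cons.prems(2) by force
    have ih: "linear_on (cell X t) (cell X (last q)) (pathmap X M q)" using Cons.IH ch Cons by simp
    have e1: "pathmap X M (s # q) = pathmap X M q \<circ> stepmap X M s t" using Cons by simp
    have e2: "last (s # q) = last q" using Cons by simp
    show ?thesis unfolding e1 e2 list.sel(1) by (rule linear_on_comp[OF stepmap_linear[OF st] ih])
  qed
qed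

lemma pathmap_linear: "p \<in> paths X M a b \<Longrightarrow> linear_on (cell X a) (cell X b) (pathmap X M p)"
  using pathmap_linear_aux unfolding paths_def by blast

lemma Gamma_linear: "b \<in> idx X m \<Longrightarrow> linear_on (cell X a) (cell X b) (Gamma X M b a)"
  unfolding Gamma_def by (intro linear_on_sum_fun[OF cell_subspace] pathmap_linear)

lemma Gamma_in_cell: "b \<in> idx X m \<Longrightarrow> x \<in> cell X a \<Longrightarrow> Gamma X M b a x \<in> cell X b"
  using Gamma_linear linear_on_mem by blast

lemma stepmap_0: "(p, t) \<in> r \<Longrightarrow> stepmap X M p t 0 = 0"
proof -
  assume pt: "(p, t) \<in> r"
  have "subspace (cell X p)" using rgraph_deg[OF pt] cell_subspace by blast
  then show ?thesis using linear_on_0 stepmap_linear[OF pt] by blast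
qed

lemma Gamma_0: "Gamma X M b a 0 = 0"
  unfolding Gamma_def
proof (rule sum.neutral, rule ballI)
  fix p assume p: "p \<in> paths X M a b"
  show "pathmap X M p 0 = 0"
  proof (cases "b = a")
    case True
    then have "p = [a]" using p paths_refl by blast
    then show ?thesis by simp
  next
    case False
    then have "(a, b) \<in> r\<^sup>+" using paths_reach[OF p] by (auto simp: rtrancl_eq_or_trancl)
    then obtain c where "(a, c) \<in> r" by (auto dest: tranclD)
    then have a: "a \<in> idx X (deg X a)" using rgraph_deg by blast
    show ?thesis by (rule linear_on_0[OF cell_subspace[OF a] pathmap_linear[OF p]])
  qed
qed

definition preds :: "'a \<Rightarrow> 'a set" where
  "preds b = {c. (c, b) \<in> r}"

definition succs :: "'a \<Rightarrow> 'a set" where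
  "succs a = {c. (a, c) \<in> r}"

lemma finite_preds: "finite (preds b)"
proof -
  have "preds b \<subseteq> idx X (deg X b + 1) \<union> idx X (deg X b - 1)"
    unfolding preds_def using rgraph_deg by fastforce
  then show ?thesis using finite_idx finite_subset by blast
qed

lemma finite_succs: "finite (succs a)"
proof -
  have "succs a \<subseteq> idx X (deg X a + 1) \<union> idx X (deg X a - 1)"
    unfolding succs_def using rgraph_deg by fastforce
  then show ?thesis using finite_idx finite_subset by blast
qed

lemma paths_snoc:
  assumes "b \<noteq> a"
  shows "paths X M a b = (\<Union>c\<in>preds b. (\<lambda>q. q @ [b]) ` paths X M a c)"
proof
  show "paths X M a b \<subseteq> (\<Union>c\<in>preds b. (\<lambda>q. q @ [b]) ` paths X M a c)"
  proof
    fix p assume p: "p \<in> paths X M a b"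
    then obtain q where q: "p = q @ [b]" "q \<noteq> []"
      using assms by (cases p rule: rev_cases) (auto simp: paths_iff hd_append split: if_splits)
    then have "q \<in> paths X M a (last q)" "last q \<in> preds b"
      using p by (auto simp: paths_iff successively_append_iff preds_def)
    then show "p \<in> (\<Union>c\<in>preds b. (\<lambda>q. q @ [b]) ` paths X M a c)" using q(1) by blast
  qed
  show "(\<Union>c\<in>preds b. (\<lambda>q. q @ [b]) ` paths X M a c) \<subseteq> paths X M a b"
    by (auto simp: paths_iff successively_append_iff preds_def)
qed

lemma Gamma_last_step:
  assumes ba: "b \<noteq> a" and a: "a \<in> idx X n" and x: "x \<in> cell X a"
  shows "Gamma X M b a x = (\<Sum>c\<in>preds b. stepmap X M c b (Gamma X M c a x))"
proof -
  have disj: "\<forall>i\<in>preds b. \<forall>j\<in>preds b. i \<noteq> j \<longrightarrow>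
      (\<lambda>q. q @ [b]) ` paths X M a i \<inter> (\<lambda>q. q @ [b]) ` paths X M a j = {}"
    unfolding paths_def by auto
  have "Gamma X M b a x = (\<Sum>c\<in>preds b. \<Sum>p\<in>(\<lambda>q. q @ [b]) ` paths X M a c. pathmap X M p x)"
    unfolding Gamma_def paths_snoc[OF ba]
    by (rule sum.UNION_disjoint) (use finite_preds finite_paths disj in auto)
  also have "\<dots> = (\<Sum>c\<in>preds b. \<Sum>q\<in>paths X M a c. pathmap X M (q @ [b]) x)"
    by (rule sum.cong[OF refl], subst sum.reindex) (auto simp: inj_on_def)
  also have "\<dots> = (\<Sum>c\<in>preds b. \<Sum>q\<in>paths X M a c. stepmap X M c b (pathmap X M q x))"
    by (rule sum.cong[OF refl], rule sum.cong[OF refl]) (auto simp: pathmap_snoc paths_def)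
  also have "\<dots> = (\<Sum>c\<in>preds b. stepmap X M c b (Gamma X M c a x))"
  proof (rule sum.cong[OF refl])
    fix c assume c: "c \<in> preds b"
    have cb: "(c, b) \<in> r" using c unfolding preds_def by simp
    have cs: "subspace (cell X c)" using rgraph_deg[OF cb] cell_subspace by blast
    show "(\<Sum>q\<in>paths X M a c. stepmap X M c b (pathmap X M q x)) = stepmap X M c b (Gamma X M c a x)"
      unfolding Gamma_def
      by (rule linear_on_sum[symmetric, OF cs stepmap_linear[OF cb] finite_paths])
         (use pathmap_linear x linear_on_mem in blast)
  qed
  finally show ?thesis .
qed

lemma paths_cons:
  assumes "b \<noteq> a"
  shows "paths X M a b = (\<Union>c\<in>succs a. (\<lambda>q. a # q) ` paths X M c b)"
proof
  show "paths X M a b \<subseteq> (\<Union>c\<in>succs a. (\<lambda>q. a # q) ` paths X M c b)"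
  proof
    fix p assume p: "p \<in> paths X M a b"
    then obtain q where q: "p = a # q" "q \<noteq> []"
      using assms by (cases p) (auto simp: paths_iff split: if_splits)
    then have "q \<in> paths X M (hd q) b" "hd q \<in> succs a"
      using p by (auto simp: paths_iff successively_Cons succs_def)
    then show "p \<in> (\<Union>c\<in>succs a. (\<lambda>q. a # q) ` paths X M c b)" using q(1) by blast
  qed
  show "(\<Union>c\<in>succs a. (\<lambda>q. a # q) ` paths X M c b) \<subseteq> paths X M a b"
    by (auto simp: paths_iff successively_Cons succs_def)
qed

lemma Gamma_first_step:
  assumes ba: "b \<noteq> a"
  shows "Gamma X M b a x = (\<Sum>c\<in>succs a. Gamma X M b c (stepmap X M a c x))"
proof -
  have disj: "\<forall>i\<in>succs a. \<forall>j\<in>succs a. i \<noteq> j \<longrightarrow>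
      (\<lambda>q. a # q) ` paths X M i b \<inter> (\<lambda>q. a # q) ` paths X M j b = {}"
    unfolding paths_def by auto
  have "Gamma X M b a x = (\<Sum>c\<in>succs a. \<Sum>p\<in>(\<lambda>q. a # q) ` paths X M c b. pathmap X M p x)"
    unfolding Gamma_def paths_cons[OF ba]
    by (rule sum.UNION_disjoint) (use finite_succs finite_paths disj in auto)
  also have "\<dots> = (\<Sum>c\<in>succs a. \<Sum>q\<in>paths X M c b. pathmap X M (a # q) x)"
    by (rule sum.cong[OF refl], subst sum.reindex) (auto simp: inj_on_def)
  also have "\<dots> = (\<Sum>c\<in>succs a. \<Sum>q\<in>paths X M c b. pathmap X M q (stepmap X M a c x))"
  proof (rule sum.cong[OF refl], rule sum.cong[OF refl])
    fix c q assume "q \<in> paths X M c b"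
    then obtain q' where "q = c # q'" unfolding paths_def by (cases q) auto
    then show "pathmap X M (a # q) x = pathmap X M q (stepmap X M a c x)" by simp
  qed
  also have "\<dots> = (\<Sum>c\<in>succs a. Gamma X M b c (stepmap X M a c x))"
    unfolding Gamma_def ..
  finally show ?thesis .
qed

lemma Gamma_eq_0_unmatched:
  assumes h: "height a \<le> n" and \<beta>: "\<beta> \<in> idx X n" and nu: "\<not> (\<exists>b. (\<beta>, b) \<in> M)" and ne: "\<beta> \<noteq> a"
  shows "Gamma X M \<beta> a x = 0"
proof (cases "(a, \<beta>) \<in> r\<^sup>*")
  case False then show ?thesis by (rule Gamma_unreachable)
next
  case True
  then have "(a, \<beta>) \<in> r\<^sup>+" using ne by (simp add: rtrancl_eq_or_trancl)
  then obtain w where aw: "(a, w) \<in> r\<^sup>*" and w\<beta>: "(w, \<beta>) \<in> r"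
    by (rule tranclE) (auto intro: trancl_into_rtrancl)
  from rgraph_deg[OF w\<beta>] have "deg X \<beta> = deg X w - 1 \<or> (\<beta>, w) \<in> M" by blast
  then show ?thesis
  proof
    assume "deg X \<beta> = deg X w - 1"
    moreover have "deg X \<beta> = n" using deg_eq \<beta> by blast
    moreover have "deg X w \<le> height a" using reach_deg_le_height[OF aw] .
    ultimately show ?thesis using h by simp
  next
    assume "(\<beta>, w) \<in> M" then show ?thesis using nu by blast
  qed
qed

lemma Gamma_eq_0_above_height: "height a < deg X \<beta> \<Longrightarrow> Gamma X M \<beta> a x = 0"
proof -
  assume h: "height a < deg X \<beta>"
  have "(a, \<beta>) \<notin> r\<^sup>*"
  proof
    assume "(a, \<beta>) \<in> r\<^sup>*" then have "deg X \<beta> \<le> height a" by (rule reach_deg_le_height)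
    then show False using h by simp
  qed
  then show ?thesis by (rule Gamma_unreachable)
qed

lemma Gamma_last_step_down:
  assumes t: "t \<in> idx X (n - 1)" and nu: "\<not> (\<exists>p. (t, p) \<in> M)" and ct: "c \<noteq> t"
    and c: "c \<in> idx X m" and v: "v \<in> cell X c"
  shows "Gamma X M t c v = (\<Sum>\<beta>\<in>{\<beta>\<in>idx X n. (\<beta>, t) \<notin> M}. dent X t \<beta> (Gamma X M \<beta> c v))"
proof -
  let ?S = "{\<beta>\<in>idx X n. (\<beta>, t) \<notin> M}"
  have dt: "deg X t = n - 1" using deg_eq t by blast
  have PS: "preds t \<subseteq> ?S"
  proof
    fix p assume "p \<in> preds t"
    then have pt: "(p, t) \<in> r" unfolding preds_def by simp
    from rgraph_deg[OF pt] have "(deg X t = deg X p - 1 \<and> (p, t) \<notin> M) \<or> (t, p) \<in> M" by blast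
    then show "p \<in> ?S"
    proof
      assume "deg X t = deg X p - 1 \<and> (p, t) \<notin> M"
      then show ?thesis using rgraph_deg[OF pt] dt by auto
    next
      assume "(t, p) \<in> M" then show ?thesis using nu by blast
    qed
  qed
  have "Gamma X M t c v = (\<Sum>p\<in>preds t. stepmap X M p t (Gamma X M p c v))"
    by (rule Gamma_last_step[OF ct[symmetric] c v])
  also have "\<dots> = (\<Sum>p\<in>preds t. dent X t p (Gamma X M p c v))"
    using nu by (simp add: stepmap_def)
  also have "\<dots> = (\<Sum>\<beta>\<in>?S. dent X t \<beta> (Gamma X M \<beta> c v))"
  proof (rule sum.mono_neutral_left)
    show "finite ?S" using finite_idx by simp
    show "preds t \<subseteq> ?S" by (rule PS)
    show "\<forall>i\<in>?S - preds t. dent X t i (Gamma X M i c v) = 0"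
    proof
      fix i assume i: "i \<in> ?S - preds t"
      then have "\<not> edge X i t" using rgraph_downI unfolding preds_def by blast
      moreover have "Gamma X M i c v \<in> cell X i" using Gamma_in_cell i v by blast
      ultimately show "dent X t i (Gamma X M i c v) = 0" using dent_no_edge i by blast
    qed
  qed
  finally show ?thesis .
qed

lemma Gamma_last_step_up:
  assumes ab: "(a, b) \<in> M" and a: "a \<in> idx X n" and h: "height c \<le> n" and ca: "c \<noteq> a"
    and c: "c \<in> idx X m" and v: "v \<in> cell X c"
  shows "Gamma X M a c v = - inv_into (cell X a) (dent X b a) (Gamma X M b c v)"
proof -
  have da: "deg X a = n" using deg_eq a by blast
  have bP: "b \<in> preds a" using rgraph_upI[OF ab] unfolding preds_def by simp
  have "Gamma X M a c v = (\<Sum>p\<in>preds a. stepmap X M p a (Gamma X M p c v))"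
    by (rule Gamma_last_step[OF ca[symmetric] c v])
  also have "\<dots> = stepmap X M b a (Gamma X M b c v)
      + (\<Sum>p\<in>preds a - {b}. stepmap X M p a (Gamma X M p c v))"
    by (rule sum.remove[OF finite_preds bP])
  also have "(\<Sum>p\<in>preds a - {b}. stepmap X M p a (Gamma X M p c v)) = 0"
  proof (rule sum.neutral, rule ballI)
    fix p assume p: "p \<in> preds a - {b}"
    then have pa: "(p, a) \<in> r" unfolding preds_def by simp
    from rgraph_deg[OF pa] have "deg X a = deg X p - 1 \<or> (a, p) \<in> M" by blast
    then show "stepmap X M p a (Gamma X M p c v) = 0"
    proof
      assume "deg X a = deg X p - 1"
      then have "height c < deg X p" using da h by simp
      then show ?thesis using Gamma_eq_0_above_height stepmap_0[OF pa] by simp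
    next
      assume "(a, p) \<in> M" then have "p = b" using matched_lower_unique ab by blast
      then show ?thesis using p by simp
    qed
  qed
  finally show ?thesis using ab unfolding stepmap_def by simp
qed

lemma dent_inv_into:
  assumes ab: "(a, b) \<in> M" and w: "w \<in> cell X b"
  shows "dent X b a (inv_into (cell X a) (dent X b a) w) = w"
  using matched_bij[OF ab] w by (simp add: bij_betw_def f_inv_into_f)

lemma inv_into_matched:
  assumes ab: "(a, b) \<in> M" and w: "w \<in> cell X b"
  shows "inv_into (cell X a) (dent X b a) w \<in> cell X a"
proof -
  have "cell X b = dent X b a ` cell X a" using matched_bij[OF ab] by (simp add: bij_betw_def)
  then show ?thesis using w by (simp add: inv_into_into)
qed

lemma dent_linear_matched: "(a, b) \<in> M \<Longrightarrow> linear_on (cell X a) (cell X b) (dent X b a)"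
  using matched_deg dent_linear by blast

(* The paths from c into a are the paths into b followed by the reversed matched edge, of weight
   -\<partial>\<^sub>b\<^sub>a\<^sup>-\<^sup>1, while the paths into b end with a step down from some cell other than a. *)
lemma bd_Gamma_matched_cancel:
  assumes ab: "(a, b) \<in> M" and a: "a \<in> idx X n" and c: "c \<in> idx X n" and cc: "c \<in> crit M"
    and v: "v \<in> cell X c"
  shows "(\<Sum>\<beta>\<in>idx X n. dent X b \<beta> (Gamma X M \<beta> c v)) = 0"
proof -
  have b: "b \<in> idx X (n - 1)" using matched_deg[OF ab] deg_eq a by auto
  have ca: "c \<noteq> a" using cc ab crit_iff by blast
  have cb: "c \<noteq> b" using cc ab crit_iff by blast
  have hc: "height c \<le> n" using height_not_lower[of c] cc crit_iff deg_eq c by auto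
  let ?w = "Gamma X M b c v"
  have w: "?w \<in> cell X b" using Gamma_in_cell b v by blast
  have sub: "subspace (cell X a)" using cell_subspace a by blast
  have "dent X b a (Gamma X M a c v) = dent X b a (- inv_into (cell X a) (dent X b a) ?w)"
    using Gamma_last_step_up[OF ab a hc ca c v] by simp
  also have "\<dots> = - dent X b a (inv_into (cell X a) (dent X b a) ?w)"
    by (rule linear_on_neg[OF sub dent_linear_matched[OF ab] inv_into_matched[OF ab w]])
  also have "\<dots> = - ?w" using dent_inv_into[OF ab w] by simp
  finally have e1: "dent X b a (Gamma X M a c v) = - ?w" .
  have S: "{\<beta>\<in>idx X n. (\<beta>, b) \<notin> M} = idx X n - {a}" using matched_upper_unique ab by blast
  have nu: "\<not> (\<exists>p. (b, p) \<in> M)" using matched_lower_not_upper[OF ab] by blast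
  have e2: "?w = (\<Sum>\<beta>\<in>idx X n - {a}. dent X b \<beta> (Gamma X M \<beta> c v))"
    using Gamma_last_step_down[OF b nu cb c v] S by simp
  have "(\<Sum>\<beta>\<in>idx X n. dent X b \<beta> (Gamma X M \<beta> c v)) =
        dent X b a (Gamma X M a c v) + (\<Sum>\<beta>\<in>idx X n - {a}. dent X b \<beta> (Gamma X M \<beta> c v))"
    by (rule sum.remove[OF finite_idx a])
  then show ?thesis using e1 e2 by simp
qed

lemma bd_Gamma_critical:
  assumes c': "c' \<in> idx X (n - 1)" and cc': "c' \<in> crit M" and c: "c \<in> idx X n" and v: "v \<in> cell X c"
  shows "(\<Sum>\<beta>\<in>idx X n. dent X c' \<beta> (Gamma X M \<beta> c v)) = Gamma X M c' c v"
proof -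
  have ne: "c \<noteq> c'"
  proof
    assume "c = c'" then have "n = n - 1" using idx_unique c c' by blast
    then show False by simp
  qed
  have nu: "\<not> (\<exists>p. (c', p) \<in> M)" using cc' crit_iff by blast
  have S: "{\<beta>\<in>idx X n. (\<beta>, c') \<notin> M} = idx X n" using cc' crit_iff by blast
  show ?thesis using Gamma_last_step_down[OF c' nu ne c v] S by simp
qed

section \<open>The Morse complex and the Morse retraction\<close>

lemma mcx_idx[simp]: "idx (mcx X M) n = idx X n \<inter> crit M"
  by (simp add: mcx_def)

lemma mcx_cell[simp]: "cell (mcx X M) = cell X"
  by (simp add: mcx_def)

lemma mcx_bd: "bd (mcx X M) n x =
    (\<Sum>a\<in>idx X n \<inter> crit M. \<Sum>b\<in>idx X (n - 1) \<inter> crit M. Gamma X M b a (comp X n a x))"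
  by (simp add: mcx_def)

lemma chsp_mcx_iff: "y \<in> chsp (mcx X M) n \<longleftrightarrow> y \<in> chsp X n \<and> (\<forall>b. b \<notin> crit M \<longrightarrow> comp X n b y = 0)"
proof
  assume "y \<in> chsp (mcx X M) n"
  then obtain f where f: "\<And>a. a \<in> idx X n \<inter> crit M \<Longrightarrow> f a \<in> cell X a" "y = (\<Sum>a\<in>idx X n \<inter> crit M. f a)"
    unfolding chsp_def by auto
  have S: "idx X n \<inter> crit M \<subseteq> idx X n" by blast
  show "y \<in> chsp X n \<and> (\<forall>b. b \<notin> crit M \<longrightarrow> comp X n b y = 0)"
    using sum_cells_in_chsp[OF S f(1)] f(2) by auto
next
  assume h: "y \<in> chsp X n \<and> (\<forall>b. b \<notin> crit M \<longrightarrow> comp X n b y = 0)"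
  have "y = (\<Sum>a\<in>idx X n. comp X n a y)" using chsp_decomposition h by blast
  also have "\<dots> = (\<Sum>a\<in>idx X n \<inter> crit M. comp X n a y)"
    by (rule sum.mono_neutral_right) (use finite_idx h in auto)
  finally have e: "y = (\<Sum>a\<in>idx X n \<inter> crit M. comp X n a y)" .
  have "\<forall>a\<in>idx X n \<inter> crit M. comp X n a y \<in> cell X a" using comp_in_cell h by blast
  then show "y \<in> chsp (mcx X M) n" unfolding chsp_def using e by auto
qed

lemma chsp_mcx_subset: "y \<in> chsp (mcx X M) n \<Longrightarrow> y \<in> chsp X n"
  using chsp_mcx_iff by blast

lemma height_critical: "c \<in> idx X n \<Longrightarrow> c \<in> crit M \<Longrightarrow> height c = n"
  using height_not_lower[of c] crit_iff deg_eq by auto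

abbreviation Gamma_sum :: "'a set \<Rightarrow> int \<Rightarrow> 'v \<Rightarrow> 'a \<Rightarrow> 'v" where
  "Gamma_sum S n y \<beta> \<equiv> (\<Sum>c\<in>S. Gamma X M \<beta> c (comp X n c y))"

lemma Gamma_sum_in_cell:
  assumes y: "y \<in> chsp X n" and \<beta>: "\<beta> \<in> idx X m"
  shows "Gamma_sum S n y \<beta> \<in> cell X \<beta>"
proof (rule cell_sum[OF \<beta>])
  fix c show "Gamma X M \<beta> c (comp X n c y) \<in> cell X \<beta>"
    by (cases "c \<in> idx X n")
      (simp_all add: Gamma_in_cell[OF \<beta>] comp_in_cell[OF y] comp_outside[OF y] Gamma_0 cell_0[OF \<beta>])
qed

lemma Phi_swap: "Phi X M n y = (\<Sum>\<beta>\<in>idx X n. Gamma_sum (idx X n \<inter> crit M) n y \<beta>)"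
  unfolding Phi_def by (rule sum.swap)

lemma Phi_in_chsp: "y \<in> chsp X n \<Longrightarrow> Phi X M n y \<in> chsp X n"
  unfolding Phi_swap by (rule chspI) (rule Gamma_sum_in_cell, assumption+)

lemma comp_Phi: "y \<in> chsp X n \<Longrightarrow>
   comp X n \<beta> (Phi X M n y) = (if \<beta> \<in> idx X n then Gamma_sum (idx X n \<inter> crit M) n y \<beta> else 0)"
  unfolding Phi_swap by (rule comp_eq[OF Gamma_sum_in_cell refl], assumption+)

lemma comp_Phi_critical: "y \<in> chsp X n \<Longrightarrow> c' \<in> idx X n \<Longrightarrow> c' \<in> crit M \<Longrightarrow>
   comp X n c' (Phi X M n y) = comp X n c' y"
proof -
  assume y: "y \<in> chsp X n" and c': "c' \<in> idx X n" "c' \<in> crit M"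
  have c'K: "c' \<in> idx X n \<inter> crit M" using c' by simp
  have "Gamma_sum (idx X n \<inter> crit M) n y c' = Gamma X M c' c' (comp X n c' y) + (\<Sum>c\<in>idx X n \<inter> crit M - {c'}. Gamma X M c' c (comp X n c y))"
    by (rule sum.remove) (use finite_idx c'K in auto)
  also have "(\<Sum>c\<in>idx X n \<inter> crit M - {c'}. Gamma X M c' c (comp X n c y)) = 0"
  proof (rule sum.neutral, rule ballI)
    fix c assume c: "c \<in> idx X n \<inter> crit M - {c'}"
    have "height c = n" using height_critical[of c n] c by blast
    then have "height c \<le> n" by simp
    moreover have "\<not> (\<exists>b. (c', b) \<in> M)" using c' crit_iff by blast
    ultimately show "Gamma X M c' c (comp X n c y) = 0" using Gamma_eq_0_unmatched c' c by blast
  qed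
  finally show ?thesis using comp_Phi[OF y] c' Gamma_refl by simp
qed

lemma comp_Phi_matched_lower: "y \<in> chsp X n \<Longrightarrow> (a, \<beta>) \<in> M \<Longrightarrow> comp X n \<beta> (Phi X M n y) = 0"
proof -
  assume y: "y \<in> chsp X n" and a\<beta>: "(a, \<beta>) \<in> M"
  show ?thesis
  proof (cases "\<beta> \<in> idx X n")
    case False then show ?thesis using comp_Phi[OF y] by simp
  next
    case True
    have "Gamma_sum (idx X n \<inter> crit M) n y \<beta> = 0"
    proof (rule sum.neutral, rule ballI)
      fix c assume c: "c \<in> idx X n \<inter> crit M"
      have "height c = n" using height_critical[of c n] c by blast
    then have "height c \<le> n" by simp
      moreover have "\<not> (\<exists>b. (\<beta>, b) \<in> M)" using matched_lower_not_upper[OF a\<beta>] by blast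
      moreover have "\<beta> \<noteq> c" using c a\<beta> crit_iff by blast
      ultimately show "Gamma X M \<beta> c (comp X n c y) = 0" using Gamma_eq_0_unmatched True by blast
    qed
    then show ?thesis using comp_Phi[OF y] True by simp
  qed
qed

lemma comp_bd_Phi:
  assumes t: "t \<in> idx X (n - 1)" and y: "y \<in> chsp X n"
  shows "comp X (n - 1) t (bd X n (Phi X M n y)) =
    (\<Sum>c\<in>idx X n \<inter> crit M. \<Sum>\<beta>\<in>idx X n. dent X t \<beta> (Gamma X M \<beta> c (comp X n c y)))"
proof -
  have "comp X (n - 1) t (bd X n (Phi X M n y)) = (\<Sum>\<beta>\<in>idx X n. dent X t \<beta> (comp X n \<beta> (Phi X M n y)))"
    by (rule comp_bd[OF Phi_in_chsp[OF y]])
  also have "\<dots> = (\<Sum>\<beta>\<in>idx X n. dent X t \<beta> (Gamma_sum (idx X n \<inter> crit M) n y \<beta>))"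
    by (rule sum.cong[OF refl]) (simp add: comp_Phi[OF y])
  also have "\<dots> = (\<Sum>\<beta>\<in>idx X n. \<Sum>c\<in>idx X n \<inter> crit M. dent X t \<beta> (Gamma X M \<beta> c (comp X n c y)))"
  proof (rule sum.cong[OF refl])
    fix \<beta> assume \<beta>: "\<beta> \<in> idx X n"
    show "dent X t \<beta> (Gamma_sum (idx X n \<inter> crit M) n y \<beta>) = (\<Sum>c\<in>idx X n \<inter> crit M. dent X t \<beta> (Gamma X M \<beta> c (comp X n c y)))"
      by (rule linear_on_sum[OF cell_subspace[OF \<beta>] dent_linear[OF \<beta> t]]) (use finite_idx Gamma_in_cell[OF \<beta>] comp_in_cell[OF y] in auto)
  qed
  also have "\<dots> = (\<Sum>c\<in>idx X n \<inter> crit M. \<Sum>\<beta>\<in>idx X n. dent X t \<beta> (Gamma X M \<beta> c (comp X n c y)))"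
    by (rule sum.swap)
  finally show ?thesis .
qed

lemma comp_bd_Phi_matched_lower:
  assumes y: "y \<in> chsp X n" and ab: "(a, b) \<in> M" and a: "a \<in> idx X n"
  shows "comp X (n - 1) b (bd X n (Phi X M n y)) = 0"
proof -
  have b: "b \<in> idx X (n - 1)" using matched_deg[OF ab] deg_eq a by auto
  show ?thesis unfolding comp_bd_Phi[OF b y]
  proof (rule sum.neutral, rule ballI)
    fix c assume c: "c \<in> idx X n \<inter> crit M"
    show "(\<Sum>\<beta>\<in>idx X n. dent X b \<beta> (Gamma X M \<beta> c (comp X n c y))) = 0"
      by (rule bd_Gamma_matched_cancel[OF ab a]) (use c comp_in_cell y in auto)
  qed
qed

lemma comp_bd_Phi_critical:
  assumes y: "y \<in> chsp X n" and c': "c' \<in> idx X (n - 1)" "c' \<in> crit M"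
  shows "comp X (n - 1) c' (bd X n (Phi X M n y)) = (\<Sum>c\<in>idx X n \<inter> crit M. Gamma X M c' c (comp X n c y))"
  unfolding comp_bd_Phi[OF c'(1) y]
  by (rule sum.cong[OF refl], rule bd_Gamma_critical[OF c']) (use comp_in_cell y in auto)

lemma bd_mcx_swap: "bd (mcx X M) n y =
    (\<Sum>b\<in>idx X (n - 1) \<inter> crit M. \<Sum>a\<in>idx X n \<inter> crit M. Gamma X M b a (comp X n a y))"
  unfolding mcx_bd by (rule sum.swap)

lemma bd_mcx_coords:
  assumes y: "y \<in> chsp X n"
  shows "bd (mcx X M) n y \<in> chsp X (n - 1)"
    and "comp X (n - 1) c' (bd (mcx X M) n y) =
      (if c' \<in> idx X (n - 1) \<inter> crit M then Gamma_sum (idx X n \<inter> crit M) n y c' else 0)"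
proof -
  have F: "Gamma_sum (idx X n \<inter> crit M) n y b \<in> cell X b" if "b \<in> idx X (n - 1) \<inter> crit M" for b
    using Gamma_sum_in_cell[OF y] that by blast
  show "bd (mcx X M) n y \<in> chsp X (n - 1)"
    unfolding bd_mcx_swap by (rule sum_cells_in_chsp(1)[OF _ F]) auto
  show "comp X (n - 1) c' (bd (mcx X M) n y) =
      (if c' \<in> idx X (n - 1) \<inter> crit M then Gamma_sum (idx X n \<inter> crit M) n y c' else 0)"
    unfolding bd_mcx_swap by (rule sum_cells_in_chsp(2)[OF _ F]) auto
qed

lemma bd_mcx_in_chsp_mcx: "y \<in> chsp X n \<Longrightarrow> bd (mcx X M) n y \<in> chsp (mcx X M) (n - 1)"
  unfolding chsp_mcx_iff using bd_mcx_coords by simp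

lemma Gamma_comp_linear: "a \<in> idx X n \<Longrightarrow> b \<in> idx X m \<Longrightarrow>
   linear_on (chsp X n) (chsp X m) (\<lambda>y. Gamma X M b a (comp X n a y))"
proof -
  assume a: "a \<in> idx X n" and b: "b \<in> idx X m"
  have "linear_on (chsp X n) (cell X b) (Gamma X M b a \<circ> comp X n a)"
    by (rule linear_on_comp[OF comp_linear[OF a] Gamma_linear[OF b]])
  then have "linear_on (chsp X n) (chsp X m) (Gamma X M b a \<circ> comp X n a)"
    by (rule linear_on_mono) (use cell_in_chsp[OF b] in blast)
  then show ?thesis by (simp add: o_def)
qed

lemma Phi_linear: "linear_on (chsp X n) (chsp X n) (Phi X M n)"
  unfolding Phi_def
  by (intro linear_on_sum_fun[OF chsp_subspace] Gamma_comp_linear) auto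

lemma bd_mcx_linear: "linear_on (chsp X n) (chsp X (n - 1)) (bd (mcx X M) n)"
  unfolding mcx_bd
  by (intro linear_on_sum_fun[OF chsp_subspace] Gamma_comp_linear) auto

lemma Psi_linear: "linear_on (chsp X n) (chsp X n) (Psi X M n)"
  unfolding Psi_def
  by (intro linear_on_sum_fun[OF chsp_subspace] Gamma_comp_linear) auto

lemma Psi_coords:
  assumes x: "x \<in> chsp X n"
  shows "Psi X M n x \<in> chsp X n"
    and "comp X n c' (Psi X M n x) = (if c' \<in> idx X n \<inter> crit M then Gamma_sum (idx X n) n x c' else 0)"
proof -
  have e: "Psi X M n x = (\<Sum>b\<in>idx X n \<inter> crit M. Gamma_sum (idx X n) n x b)"
    unfolding Psi_def by (rule sum.swap)
  have F: "Gamma_sum (idx X n) n x b \<in> cell X b" if "b \<in> idx X n \<inter> crit M" for b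
    using Gamma_sum_in_cell[OF x] that by blast
  show "Psi X M n x \<in> chsp X n"
    unfolding e by (rule sum_cells_in_chsp(1)[OF _ F]) auto
  show "comp X n c' (Psi X M n x) = (if c' \<in> idx X n \<inter> crit M then Gamma_sum (idx X n) n x c' else 0)"
    unfolding e by (rule sum_cells_in_chsp(2)[OF _ F]) auto
qed

lemma Psi_in_chsp_mcx: "x \<in> chsp X n \<Longrightarrow> Psi X M n x \<in> chsp (mcx X M) n"
  unfolding chsp_mcx_iff using Psi_coords by simp

lemma Psi_linear_mcx: "linear_on (chsp X n) (chsp (mcx X M) n) (Psi X M n)"
  using Psi_linear Psi_in_chsp_mcx unfolding linear_on_def by blast

lemma Phi_linear_mcx: "linear_on (chsp (mcx X M) n) (chsp X n) (Phi X M n)"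
  using Phi_linear chsp_mcx_subset unfolding linear_on_def by blast

definition below :: "int \<Rightarrow> 'a \<Rightarrow> 'a set" where
  "below m a = {a' \<in> idx X m. (a', a) \<in> r\<^sup>+}"

definition above :: "int \<Rightarrow> 'a \<Rightarrow> 'a set" where
  "above m a = {d \<in> idx X m. (a, d) \<in> r\<^sup>+}"

lemma below_less: "(a', a) \<in> r\<^sup>+ \<Longrightarrow> a' \<in> idx X m \<Longrightarrow> card (below m a') < card (below m a)"
proof -
  assume aa: "(a', a) \<in> r\<^sup>+" and a': "a' \<in> idx X m"
  have "below m a' \<subseteq> below m a" unfolding below_def using aa by (auto intro: trancl_trans)
  moreover have "a' \<in> below m a" unfolding below_def using aa a' by simp
  moreover have "a' \<notin> below m a'" unfolding below_def using rgraph_acyclic by blast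
  ultimately have "below m a' < below m a" by blast
  moreover have "finite (below m a)" unfolding below_def using finite_idx by simp
  ultimately show ?thesis by (simp add: psubset_card_mono)
qed

lemma above_less: "(a, d) \<in> r\<^sup>+ \<Longrightarrow> d \<in> idx X m \<Longrightarrow> card (above m d) < card (above m a)"
proof -
  assume aa: "(a, d) \<in> r\<^sup>+" and d: "d \<in> idx X m"
  have "above m d \<subseteq> above m a" unfolding above_def using aa by (auto intro: trancl_trans)
  moreover have "d \<in> above m a" unfolding above_def using aa d by simp
  moreover have "d \<notin> above m d" unfolding above_def using rgraph_acyclic by blast
  ultimately have "above m d < above m a" by blast
  moreover have "finite (above m a)" unfolding above_def using finite_idx by simp
  ultimately show ?thesis by (simp add: psubset_card_mono)
qed

lemma dent_matched_eq_0: "(a, b) \<in> M \<Longrightarrow> v \<in> cell X a \<Longrightarrow> dent X b a v = 0 \<Longrightarrow> v = 0"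
proof -
  assume ab: "(a, b) \<in> M" and v: "v \<in> cell X a" and d: "dent X b a v = 0"
  have a: "a \<in> idx X (deg X a)" using matched_deg[OF ab] by blast
  have "dent X b a 0 = 0" using linear_on_0[OF cell_subspace[OF a] dent_linear_matched[OF ab]] .
  moreover have "inj_on (dent X b a) (cell X a)"
    using matched_bij[OF ab] by (simp add: bij_betw_def)
  ultimately show "v = 0" using v d cell_0[OF a] by (metis inj_onD)
qed

lemma comp_bd_matched_upper:
  assumes x: "x \<in> chsp X m" and ab: "(a, b) \<in> M" and a: "a \<in> idx X m"
    and above: "\<And>\<beta>. \<beta> \<in> idx X m \<Longrightarrow> (\<beta>, a) \<in> r\<^sup>+ \<Longrightarrow> comp X m \<beta> x = 0"
  shows "comp X (m - 1) b (bd X m x) = dent X b a (comp X m a x)"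
proof -
  have b: "b \<in> idx X (m - 1)" using matched_deg[OF ab] deg_eq a by auto
  have "comp X (m - 1) b (bd X m x) = (\<Sum>\<beta>\<in>idx X m. dent X b \<beta> (comp X m \<beta> x))"
    by (rule comp_bd[OF x])
  also have "\<dots> = dent X b a (comp X m a x) + (\<Sum>\<beta>\<in>idx X m - {a}. dent X b \<beta> (comp X m \<beta> x))"
    by (rule sum.remove[OF finite_idx a])
  also have "(\<Sum>\<beta>\<in>idx X m - {a}. dent X b \<beta> (comp X m \<beta> x)) = 0"
  proof (rule sum.neutral, rule ballI)
    fix \<beta> assume \<beta>: "\<beta> \<in> idx X m - {a}"
    show "dent X b \<beta> (comp X m \<beta> x) = 0"
    proof (cases "edge X \<beta> b")
      case False
      then show ?thesis using dent_no_edge \<beta> comp_in_cell x by blast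
    next
      case True
      then have "(\<beta>, b) \<in> r" using matched_upper_unique ab \<beta> by (blast intro: rgraph_downI)
      then have "(\<beta>, a) \<in> r\<^sup>+" using rgraph_upI[OF ab] by auto
      then have "comp X m \<beta> x = 0" using above \<beta> by blast
      then show ?thesis using linear_on_0[OF cell_subspace dent_linear] \<beta> b by auto
    qed
  qed
  finally show ?thesis by simp
qed

(* Induction along the reversed graph within degree m: the coefficient of x on an upper partner a
   is determined by the b-coefficient of its boundary, as \<partial>\<^sub>b\<^sub>a is invertible. *)
lemma chain_eq_0I:
  assumes x: "x \<in> chsp X m"
    and unmatched: "\<And>c. c \<in> idx X m \<Longrightarrow> \<not> (\<exists>b. (c, b) \<in> M) \<Longrightarrow> comp X m c x = 0"
    and matched: "\<And>a b. (a, b) \<in> M \<Longrightarrow> a \<in> idx X m \<Longrightarrow> comp X (m - 1) b (bd X m x) = 0"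
  shows "x = 0"
proof -
  have "a \<in> idx X m \<longrightarrow> comp X m a x = 0" for a
  proof (induction a rule: measure_induct_rule[where f="\<lambda>a. card (below m a)"])
    case (less a)
    show ?case
    proof
      assume a: "a \<in> idx X m"
      show "comp X m a x = 0"
      proof (cases "\<exists>b. (a, b) \<in> M")
        case False
        then show ?thesis using unmatched a by blast
      next
        case True
        then obtain b where ab: "(a, b) \<in> M" by blast
        have "comp X m \<beta> x = 0" if "\<beta> \<in> idx X m" "(\<beta>, a) \<in> r\<^sup>+" for \<beta>
          using less below_less[OF that(2,1)] that(1) by blast
        then have "dent X b a (comp X m a x) = 0"
          using comp_bd_matched_upper[OF x ab a] matched[OF ab a] by simp
        then show ?thesis using dent_matched_eq_0[OF ab] comp_in_cell x a by blast
      qed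
    qed
  qed
  then show ?thesis using chsp_decomposition[OF x] by simp
qed

lemma comp_bd_Phi_unmatched:
  assumes ym: "y \<in> chsp (mcx X M) n" and c: "c \<in> idx X (n - 1)" and nu: "\<not> (\<exists>b. (c, b) \<in> M)"
  shows "comp X (n - 1) c (bd X n (Phi X M n y)) = comp X (n - 1) c (Phi X M (n - 1) (bd (mcx X M) n y))"
proof -
  have y: "y \<in> chsp X n" using chsp_mcx_subset[OF ym] .
  have d: "bd (mcx X M) n y \<in> chsp X (n - 1)" using bd_mcx_coords(1)[OF y] .
  show ?thesis
  proof (cases "c \<in> crit M")
    case True
    have "comp X (n - 1) c (bd X n (Phi X M n y)) = (\<Sum>a\<in>idx X n \<inter> crit M. Gamma X M c a (comp X n a y))"
      using comp_bd_Phi_critical[OF y c True] .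
    also have "\<dots> = comp X (n - 1) c (bd (mcx X M) n y)"
      using bd_mcx_coords(2)[OF y, of c] c True by simp
    also have "\<dots> = comp X (n - 1) c (Phi X M (n - 1) (bd (mcx X M) n y))"
      using comp_Phi_critical[OF d c True] by simp
    finally show ?thesis .
  next
    case False
    then obtain a where ac: "(a, c) \<in> M" using nu crit_iff by blast
    have "deg X a - 1 = n - 1" using matched_deg[OF ac] c idx_unique by blast
    then have a: "a \<in> idx X n" using matched_deg[OF ac] by simp
    show ?thesis using comp_bd_Phi_matched_lower[OF y ac a] comp_Phi_matched_lower[OF d ac] by simp
  qed
qed

lemma bd_Phi:
  assumes ym: "y \<in> chsp (mcx X M) n"
  shows "bd X n (Phi X M n y) = Phi X M (n - 1) (bd (mcx X M) n y)"
proof -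
  have y: "y \<in> chsp X n" using chsp_mcx_subset[OF ym] .
  let ?d = "bd (mcx X M) n y"
  have d: "?d \<in> chsp X (n - 1)" using bd_mcx_coords(1)[OF y] .
  have p1: "bd X n (Phi X M n y) \<in> chsp X (n - 1)" using bd_in_chsp Phi_in_chsp y by blast
  have p2: "Phi X M (n - 1) ?d \<in> chsp X (n - 1)" using Phi_in_chsp d by blast
  let ?w = "bd X n (Phi X M n y) - Phi X M (n - 1) ?d"
  have "?w = 0"
  proof (rule chain_eq_0I)
    show "?w \<in> chsp X (n - 1)" using chsp_diff p1 p2 by blast
    show "comp X (n - 1) c ?w = 0" if "c \<in> idx X (n - 1)" "\<not> (\<exists>b. (c, b) \<in> M)" for c
      using comp_diff[OF p1 p2] comp_bd_Phi_unmatched[OF ym that] by simp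
    show "comp X (n - 1 - 1) b (bd X (n - 1) ?w) = 0" if ab: "(a, b) \<in> M" and a: "a \<in> idx X (n - 1)" for a b
    proof -
      have q: "bd X (n - 1) (Phi X M (n - 1) ?d) \<in> chsp X (n - 1 - 1)" using bd_in_chsp p2 by blast
      have "bd X (n - 1) ?w = 0 - bd X (n - 1) (Phi X M (n - 1) ?d)"
        using bd_diff[OF p1 p2] bd_bd Phi_in_chsp y by simp
      then show ?thesis using comp_diff[OF chsp_0 q] comp_0 comp_bd_Phi_matched_lower[OF d ab a]
        by simp
    qed
  qed
  then show ?thesis by simp
qed

lemma Phi_inj:
  assumes y1: "y1 \<in> chsp (mcx X M) n" and y2: "y2 \<in> chsp (mcx X M) n"
    and eq: "Phi X M n y1 = Phi X M n y2"
  shows "y1 = y2"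
proof (rule chsp_eqI)
  show "y1 \<in> chsp X n" "y2 \<in> chsp X n" using y1 y2 chsp_mcx_subset by blast+
  fix a assume a: "a \<in> idx X n"
  show "comp X n a y1 = comp X n a y2"
  proof (cases "a \<in> crit M")
    case True
    then show ?thesis using comp_Phi_critical[OF _ a True] eq \<open>y1 \<in> chsp X n\<close> \<open>y2 \<in> chsp X n\<close> by metis
  next
    case False then show ?thesis using y1 y2 chsp_mcx_iff by simp
  qed
qed

lemma Phi_0: "Phi X M n 0 = 0"
  using linear_on_0[OF chsp_subspace Phi_linear] .

lemma bd_mcx_bd_mcx:
  assumes x: "x \<in> chsp (mcx X M) n"
  shows "bd (mcx X M) (n - 1) (bd (mcx X M) n x) = 0"
proof -
  let ?d1 = "bd (mcx X M) n x"
  let ?d2 = "bd (mcx X M) (n - 1) ?d1"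
  have d1: "?d1 \<in> chsp (mcx X M) (n - 1)" using bd_mcx_in_chsp_mcx chsp_mcx_subset x by blast
  have d2: "?d2 \<in> chsp (mcx X M) (n - 1 - 1)" using bd_mcx_in_chsp_mcx chsp_mcx_subset d1 by blast
  have "Phi X M (n - 1 - 1) ?d2 = bd X (n - 1) (Phi X M (n - 1) ?d1)" using bd_Phi[OF d1] by simp
  also have "\<dots> = bd X (n - 1) (bd X n (Phi X M n x))" using bd_Phi[OF x] by simp
  also have "\<dots> = Phi X M (n - 1 - 1) 0" using bd_bd Phi_in_chsp chsp_mcx_subset x Phi_0 by simp
  finally have "Phi X M (n - 1 - 1) ?d2 = Phi X M (n - 1 - 1) 0" .
  moreover have "0 \<in> chsp (mcx X M) (n - 1 - 1)" using chsp_mcx_iff chsp_0 comp_0 by simp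
  ultimately show ?thesis using Phi_inj[OF d2] by blast
qed

lemma based_complex_mcx: "based_complex (mcx X M)"
  unfolding based_complex_def
proof (intro conjI allI ballI impI)
  fix n show "finite (idx (mcx X M) n)" using finite_idx by simp
next
  fix n :: int assume "n < 0" then show "idx (mcx X M) n = {}" using idx_negative by simp
next
  fix n m :: int assume "n \<noteq> m" then show "idx (mcx X M) n \<inter> idx (mcx X M) m = {}"
    using idx_unique by auto
next
  fix n a assume "a \<in> idx (mcx X M) n" then show "\<exists>B. finite B \<and> cell (mcx X M) a = span B"
    using cell_finite_span[of a n] by simp
next
  fix n :: int and f a
  assume h: "(\<forall>a\<in>idx (mcx X M) n. f a \<in> cell (mcx X M) a) \<and> (\<Sum>a\<in>idx (mcx X M) n. f a) = 0"
    and a: "a \<in> idx (mcx X M) n"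
  have S: "idx X n \<inter> crit M \<subseteq> idx X n" by blast
  have F: "\<And>b. b \<in> idx X n \<inter> crit M \<Longrightarrow> f b \<in> cell X b" using h by simp
  have "comp X n a (\<Sum>b\<in>idx X n \<inter> crit M. f b) = f a"
    using sum_cells_in_chsp(2)[OF S F, of a] a by simp
  then show "f a = 0" using h comp_0 by simp
next
  fix n x y assume x: "x \<in> chsp (mcx X M) n" and y: "y \<in> chsp (mcx X M) n"
  show "bd (mcx X M) n (x + y) = bd (mcx X M) n x + bd (mcx X M) n y"
    using linear_on_add[OF bd_mcx_linear] chsp_mcx_subset x y by blast
next
  fix n x c assume x: "x \<in> chsp (mcx X M) n"
  show "bd (mcx X M) n (c *\<^sub>R x) = c *\<^sub>R bd (mcx X M) n x"
    using linear_on_scale[OF bd_mcx_linear] chsp_mcx_subset x by blast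
next
  fix n x assume x: "x \<in> chsp (mcx X M) n"
  show "bd (mcx X M) n x \<in> chsp (mcx X M) (n - 1)"
    using bd_mcx_in_chsp_mcx chsp_mcx_subset x by blast
qed (simp add: bd_mcx_bd_mcx)

lemma Phi_boundaries_mcx:
  assumes "y \<in> boundaries (mcx X M) n"
  shows "Phi X M n y \<in> boundaries X n"
proof -
  obtain g where g: "g \<in> chsp (mcx X M) (n + 1)" and y: "y = bd (mcx X M) (n + 1) g"
    using assms unfolding boundaries_def by blast
  have "Phi X M n y = bd X (n + 1) (Phi X M (n + 1) g)"
    using bd_Phi[OF g] y by simp
  moreover have "Phi X M (n + 1) g \<in> chsp X (n + 1)"
    using Phi_in_chsp[OF chsp_mcx_subset[OF g]] .
  ultimately show ?thesis unfolding boundaries_def by blast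
qed

lemma Phi_cycle_not_in_image:
  assumes z: "z \<in> cycles (mcx X M) m" and S: "S \<subseteq> chsp (mcx X M) m" and zS: "z \<notin> S"
  shows "Phi X M m z \<in> cycles X m" and "Phi X M m z \<notin> Phi X M m ` S"
proof -
  have zc: "z \<in> chsp (mcx X M) m" and bd_z: "bd (mcx X M) m z = 0"
    using z by (simp_all add: cycles_def)
  have "bd X m (Phi X M m z) = Phi X M (m - 1) 0"
    using bd_Phi[OF zc] bd_z by simp
  then show "Phi X M m z \<in> cycles X m"
    using Phi_0 Phi_in_chsp[OF chsp_mcx_subset[OF zc]] by (simp add: cycles_def)
  show "Phi X M m z \<notin> Phi X M m ` S"
  proof
    assume "Phi X M m z \<in> Phi X M m ` S"
    then obtain y where "y \<in> S" "Phi X M m z = Phi X M m y" by blast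
    then show False using Phi_inj[OF zc, of y] S zS by blast
  qed
qed

section \<open>Matchings without pairs of an \<open>n\<close>-cell and an \<open>(n - 1)\<close>-cell\<close>

lemma free_matched: "\<forall>(a, b)\<in>M. \<not> (a \<in> idx X n \<and> b \<in> idx X (n - 1)) \<Longrightarrow> (a, b) \<in> M \<Longrightarrow> a \<notin> idx X n"
proof
  assume h: "\<forall>(a, b)\<in>M. \<not> (a \<in> idx X n \<and> b \<in> idx X (n - 1))" and ab: "(a, b) \<in> M" and a: "a \<in> idx X n"
  have "b \<in> idx X (n - 1)" using matched_deg[OF ab] deg_eq[OF a] by simp
  then show False using h ab a by blast
qed

lemma free_no_lower_partner:
  assumes free: "\<And>a b. (a, b) \<in> M \<Longrightarrow> a \<notin> idx X n" and \<alpha>: "\<alpha> \<in> idx X (n - 1)"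
  shows "\<not> (\<exists>a. (a, \<alpha>) \<in> M)"
proof
  assume "\<exists>a. (a, \<alpha>) \<in> M"
  then obtain a where a\<alpha>: "(a, \<alpha>) \<in> M" by blast
  have "deg X a - 1 = n - 1" using matched_deg[OF a\<alpha>] \<alpha> idx_unique by blast
  then have "a \<in> idx X n" using matched_deg[OF a\<alpha>] by simp
  then show False using free a\<alpha> by blast
qed

lemma comp_Psi_critical:
  assumes free: "\<And>a b. (a, b) \<in> M \<Longrightarrow> a \<notin> idx X n" and z: "z \<in> chsp X (n - 1)"
    and c: "c \<in> idx X (n - 1)" "c \<in> crit M"
  shows "comp X (n - 1) c (Psi X M (n - 1) z) = comp X (n - 1) c z"
proof -
  have "comp X (n - 1) c (Psi X M (n - 1) z) = Gamma_sum (idx X (n - 1)) (n - 1) z c"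
    using Psi_coords(2)[OF z, of c] c by simp
  also have "\<dots> = Gamma X M c c (comp X (n - 1) c z)
      + (\<Sum>a\<in>idx X (n - 1) - {c}. Gamma X M c a (comp X (n - 1) a z))"
    by (rule sum.remove[OF finite_idx c(1)])
  also have "(\<Sum>a\<in>idx X (n - 1) - {c}. Gamma X M c a (comp X (n - 1) a z)) = 0"
  proof (rule sum.neutral, rule ballI)
    fix a assume a: "a \<in> idx X (n - 1) - {c}"
    have "height a = n - 1"
      using height_not_lower[OF free_no_lower_partner[OF free]] a deg_eq by auto
    moreover have "\<not> (\<exists>b. (c, b) \<in> M)" using c crit_iff by blast
    ultimately show "Gamma X M c a (comp X (n - 1) a z) = 0"
      using Gamma_eq_0_unmatched[of a "n - 1" c] c a by auto
  qed
  finally show ?thesis using Gamma_refl by simp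
qed

lemma Phi_Psi_cycle:
  assumes free: "\<And>a b. (a, b) \<in> M \<Longrightarrow> a \<notin> idx X n"
    and z: "z \<in> chsp X (n - 1)" and zc: "bd X (n - 1) z = 0"
  shows "Phi X M (n - 1) (Psi X M (n - 1) z) = z"
proof -
  let ?p = "Psi X M (n - 1) z"
  have p: "?p \<in> chsp X (n - 1)" using Psi_coords(1)[OF z] .
  let ?w = "Phi X M (n - 1) ?p - z"
  have pp: "Phi X M (n - 1) ?p \<in> chsp X (n - 1)" using Phi_in_chsp p by blast
  have "?w = 0"
  proof (rule chain_eq_0I)
    show "?w \<in> chsp X (n - 1)" using chsp_diff pp z by blast
    fix c assume c: "c \<in> idx X (n - 1)" and nu: "\<not> (\<exists>b. (c, b) \<in> M)"
    have "\<not> (\<exists>a. (a, c) \<in> M)" by (rule free_no_lower_partner[OF free c])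
    then have cc: "c \<in> crit M" using nu unfolding crit_iff by blast
    show "comp X (n - 1) c ?w = 0"
      using comp_diff[OF pp z] comp_Phi_critical[OF p c cc] comp_Psi_critical[OF free z c cc] by simp
  next
    fix a b assume ab: "(a, b) \<in> M" and a: "a \<in> idx X (n - 1)"
    have "bd X (n - 1) ?w = bd X (n - 1) (Phi X M (n - 1) ?p)" using bd_diff[OF pp z] zc by simp
    then show "comp X (n - 1 - 1) b (bd X (n - 1) ?w) = 0"
      using comp_bd_Phi_matched_lower[OF p ab a] by simp
  qed
  then show ?thesis by simp
qed

lemma Psi_cycle_mcx:
  assumes free: "\<And>a b. (a, b) \<in> M \<Longrightarrow> a \<notin> idx X n" and z: "z \<in> cycles X (n - 1)"
  shows "Psi X M (n - 1) z \<in> cycles (mcx X M) (n - 1)"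
proof -
  let ?p = "Psi X M (n - 1) z"
  have p: "?p \<in> chsp (mcx X M) (n - 1)" using z Psi_in_chsp_mcx by (simp add: cycles_def)
  have bd_p: "bd (mcx X M) (n - 1) ?p \<in> chsp (mcx X M) (n - 1 - 1)"
    using bd_mcx_in_chsp_mcx chsp_mcx_subset p by blast
  have "Phi X M (n - 1 - 1) (bd (mcx X M) (n - 1) ?p) = bd X (n - 1) (Phi X M (n - 1) ?p)"
    using bd_Phi[OF p] by simp
  also have "\<dots> = Phi X M (n - 1 - 1) 0"
    using Phi_Psi_cycle[OF free] z Phi_0 by (simp add: cycles_def)
  finally have "bd (mcx X M) (n - 1) ?p = 0"
    using Phi_inj[OF bd_p] chsp_mcx_iff chsp_0 comp_0 by simp
  then show ?thesis using p by (simp add: cycles_def)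
qed

lemma Phi_free:
  assumes nf: "\<And>a b. (a, b) \<in> M \<Longrightarrow> a \<notin> idx X n" and y: "y \<in> chsp (mcx X M) n"
  shows "Phi X M n y = y"
proof (rule chsp_eqI)
  have y': "y \<in> chsp X n" using chsp_mcx_subset[OF y] .
  show "Phi X M n y \<in> chsp X n" using Phi_in_chsp[OF y'] .
  show "y \<in> chsp X n" using y' .
  fix a assume a: "a \<in> idx X n"
  show "comp X n a (Phi X M n y) = comp X n a y"
  proof (cases "a \<in> crit M")
    case True then show ?thesis using comp_Phi_critical[OF y' a] by simp
  next
    case False
    from False obtain b where "(a, b) \<in> M \<or> (b, a) \<in> M" unfolding crit_iff by blast
    then have ba: "(b, a) \<in> M" using nf a by blast
    have "comp X n a y = 0" using False y chsp_mcx_iff by blast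
    then show ?thesis using comp_Phi_matched_lower[OF y' ba] by simp
  qed
qed

abbreviation psi_cell :: "int \<Rightarrow> 'a \<Rightarrow> 'v \<Rightarrow> 'v" where
  "psi_cell n \<alpha> v \<equiv> (\<Sum>\<beta>\<in>idx X n \<inter> crit M. Gamma X M \<beta> \<alpha> v)"

lemma psi_cell_critical:
  assumes \<alpha>: "\<alpha> \<in> idx X n" "\<alpha> \<in> crit M"
  shows "psi_cell n \<alpha> v = v"
proof -
  have "psi_cell n \<alpha> v = Gamma X M \<alpha> \<alpha> v + (\<Sum>\<beta>\<in>idx X n \<inter> crit M - {\<alpha>}. Gamma X M \<beta> \<alpha> v)"
    by (rule sum.remove) (use finite_idx \<alpha> in auto)
  also have "(\<Sum>\<beta>\<in>idx X n \<inter> crit M - {\<alpha>}. Gamma X M \<beta> \<alpha> v) = 0"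
  proof (rule sum.neutral, rule ballI)
    fix \<beta> assume \<beta>: "\<beta> \<in> idx X n \<inter> crit M - {\<alpha>}"
    then have "\<not> (\<exists>b. (\<beta>, b) \<in> M)" using crit_iff by blast
    then show "Gamma X M \<beta> \<alpha> v = 0"
      using Gamma_eq_0_unmatched[of \<alpha> n \<beta>] height_critical[OF \<alpha>] \<beta> by auto
  qed
  finally show ?thesis using Gamma_refl by simp
qed

lemma Gamma_from_matched_lower:
  assumes a'\<alpha>: "(a', \<alpha>) \<in> M" and \<alpha>: "\<alpha> \<in> idx X n" and \<beta>: "\<beta> \<in> idx X n" "\<beta> \<in> crit M"
  shows "Gamma X M \<beta> \<alpha> v = Gamma X M \<beta> a' (- inv_into (cell X a') (dent X \<alpha> a') v)"
proof -
  have "\<beta> \<noteq> \<alpha>" using \<beta>(2) a'\<alpha> crit_iff by blast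
  then have "Gamma X M \<beta> \<alpha> v = (\<Sum>c\<in>succs \<alpha>. Gamma X M \<beta> c (stepmap X M \<alpha> c v))"
    by (rule Gamma_first_step)
  also have "\<dots> = Gamma X M \<beta> a' (stepmap X M \<alpha> a' v)
      + (\<Sum>c\<in>succs \<alpha> - {a'}. Gamma X M \<beta> c (stepmap X M \<alpha> c v))"
    by (rule sum.remove[OF finite_succs]) (use rgraph_upI[OF a'\<alpha>] in \<open>simp add: succs_def\<close>)
  also have "(\<Sum>c\<in>succs \<alpha> - {a'}. Gamma X M \<beta> c (stepmap X M \<alpha> c v)) = 0"
  proof (rule sum.neutral, rule ballI)
    fix c assume c: "c \<in> succs \<alpha> - {a'}"
    then have \<alpha>c: "(\<alpha>, c) \<in> r" unfolding succs_def by simp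
    from rgraph_deg[OF \<alpha>c] consider "deg X c = n - 1" | "(c, \<alpha>) \<in> M"
      using deg_eq[OF \<alpha>] by auto
    then show "Gamma X M \<beta> c (stepmap X M \<alpha> c v) = 0"
    proof cases
      case 1
      then have "height c \<le> n" "\<beta> \<noteq> c" using height_le[of c] deg_eq[OF \<beta>(1)] by auto
      moreover have "\<not> (\<exists>b. (\<beta>, b) \<in> M)" using \<beta>(2) crit_iff by blast
      ultimately show ?thesis using Gamma_eq_0_unmatched \<beta>(1) by blast
    next
      case 2
      then show ?thesis using c matched_upper_unique[OF a'\<alpha>] by blast
    qed
  qed
  finally show ?thesis using a'\<alpha> unfolding stepmap_def by simp
qed

lemma Gamma_from_matched_upper:
  assumes a'\<alpha>: "(a', \<alpha>) \<in> M" and a': "a' \<in> idx X (n + 1)" and \<beta>: "\<beta> \<in> idx X n"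
    and w: "w \<in> cell X a'"
  shows "Gamma X M \<beta> a' w = (\<Sum>\<delta>\<in>idx X n - {\<alpha>}. Gamma X M \<beta> \<delta> (dent X \<delta> a' w))"
proof -
  have "\<beta> \<noteq> a'"
  proof
    assume "\<beta> = a'"
    then have "n = n + 1" using idx_unique \<beta> a' by blast
    then show False by simp
  qed
  then have "Gamma X M \<beta> a' w = (\<Sum>c\<in>succs a'. Gamma X M \<beta> c (stepmap X M a' c w))"
    by (rule Gamma_first_step)
  also have "\<dots> = (\<Sum>c\<in>succs a'. Gamma X M \<beta> c (dent X c a' w))"
    by (rule sum.cong[OF refl]) (use matched_upper_not_lower[OF a'\<alpha>] in \<open>simp add: stepmap_def\<close>)
  also have "\<dots> = (\<Sum>\<delta>\<in>idx X n - {\<alpha>}. Gamma X M \<beta> \<delta> (dent X \<delta> a' w))"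
  proof (rule sum.mono_neutral_left)
    show "finite (idx X n - {\<alpha>})" using finite_idx by simp
    show "succs a' \<subseteq> idx X n - {\<alpha>}"
    proof
      fix c assume "c \<in> succs a'"
      then have a'c: "(a', c) \<in> r" unfolding succs_def by simp
      have "(c, a') \<notin> M" by (rule matched_upper_not_lower[OF a'\<alpha>])
      then have "deg X c = deg X a' - 1" "(a', c) \<notin> M" "c \<in> idx X (deg X c)"
        using rgraph_deg[OF a'c] by auto
      moreover have "deg X a' = n + 1" by (rule deg_eq[OF a'])
      ultimately show "c \<in> idx X n - {\<alpha>}" using a'\<alpha> by auto
    qed
    show "\<forall>\<delta>\<in>idx X n - {\<alpha>} - succs a'. Gamma X M \<beta> \<delta> (dent X \<delta> a' w) = 0"
    proof
      fix \<delta> assume \<delta>: "\<delta> \<in> idx X n - {\<alpha>} - succs a'"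
      then have "(a', \<delta>) \<notin> M" using matched_lower_unique[OF a'\<alpha>] by blast
      then have "\<not> edge X a' \<delta>" using rgraph_downI \<delta> unfolding succs_def by blast
      then have "dent X \<delta> a' w = 0" by (rule dent_no_edge[OF a' _ w])
      then show "Gamma X M \<beta> \<delta> (dent X \<delta> a' w) = 0" by (simp add: Gamma_0)
    qed
  qed
  finally show ?thesis .
qed

lemma matched_upper_idx: "(a', \<alpha>) \<in> M \<Longrightarrow> \<alpha> \<in> idx X n \<Longrightarrow> a' \<in> idx X (n + 1)"
  using matched_deg idx_unique by force

lemma matched_lower_bd:
  assumes a'\<alpha>: "(a', \<alpha>) \<in> M" and \<alpha>: "\<alpha> \<in> idx X n" and v: "v \<in> cell X \<alpha>"
  obtains g where "g \<in> cell X a'" "dent X \<alpha> a' g = v"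
    "bd X (n + 1) g = v + (\<Sum>\<delta>\<in>idx X n - {\<alpha>}. dent X \<delta> a' g)"
proof -
  define g where "g = inv_into (cell X a') (dent X \<alpha> a') v"
  have g: "g \<in> cell X a'" "dent X \<alpha> a' g = v"
    using matched_bij[OF a'\<alpha>] v unfolding g_def by (auto simp: bij_betw_def inv_into_into f_inv_into_f)
  moreover have "bd X (n + 1) g = v + (\<Sum>\<delta>\<in>idx X n - {\<alpha>}. dent X \<delta> a' g)"
    using bd_cell_eq_sum_dent[OF matched_upper_idx[OF a'\<alpha> \<alpha>] g(1)]
      sum.remove[OF finite_idx \<alpha>, of "\<lambda>\<delta>. dent X \<delta> a' g"] g(2) by simp
  ultimately show ?thesis using that by blast
qed

lemma psi_cell_matched_lower:
  assumes a'\<alpha>: "(a', \<alpha>) \<in> M" and \<alpha>: "\<alpha> \<in> idx X n" and w: "w \<in> cell X a'"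
  shows "psi_cell n \<alpha> (dent X \<alpha> a' w) = - (\<Sum>\<delta>\<in>idx X n - {\<alpha>}. psi_cell n \<delta> (dent X \<delta> a' w))"
proof -
  have a': "a' \<in> idx X (n + 1)" by (rule matched_upper_idx[OF a'\<alpha> \<alpha>])
  have inv: "inv_into (cell X a') (dent X \<alpha> a') (dent X \<alpha> a' w) = w"
    using matched_bij[OF a'\<alpha>] w by (simp add: bij_betw_def)
  have "Gamma X M \<beta> \<alpha> (dent X \<alpha> a' w) = - (\<Sum>\<delta>\<in>idx X n - {\<alpha>}. Gamma X M \<beta> \<delta> (dent X \<delta> a' w))"
    if \<beta>: "\<beta> \<in> idx X n \<inter> crit M" for \<beta>
  proof -
    have "Gamma X M \<beta> \<alpha> (dent X \<alpha> a' w) = Gamma X M \<beta> a' (- w)"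
      using Gamma_from_matched_lower[OF a'\<alpha> \<alpha>] \<beta> inv by simp
    also have "\<dots> = - Gamma X M \<beta> a' w"
      using linear_on_neg[OF cell_subspace[OF a'] Gamma_linear w] \<beta> by blast
    finally show ?thesis using Gamma_from_matched_upper[OF a'\<alpha> a' _ w] \<beta> by simp
  qed
  then have "psi_cell n \<alpha> (dent X \<alpha> a' w)
      = - (\<Sum>\<beta>\<in>idx X n \<inter> crit M. \<Sum>\<delta>\<in>idx X n - {\<alpha>}. Gamma X M \<beta> \<delta> (dent X \<delta> a' w))"
    by (simp add: sum_negf)
  then show ?thesis by (simp add: sum.swap[of _ "idx X n \<inter> crit M"])
qed

(* For a lower partner \<alpha> of a', write v as the \<alpha>-component of the boundary of some g in C_a';
   then psi_cell v - v differs from -\<partial>g by the same expressions for the other components of \<partial>g,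
   whose cells lie strictly beyond \<alpha> in the reversed graph. *)
lemma psi_cell_diff_boundary:
  assumes free: "\<And>a b. (a, b) \<in> M \<Longrightarrow> a \<notin> idx X n"
    and \<alpha>: "\<alpha> \<in> idx X n" and v: "v \<in> cell X \<alpha>"
  shows "psi_cell n \<alpha> v - v \<in> boundaries X n"
  using \<alpha> v
proof (induction \<alpha> arbitrary: v rule: measure_induct_rule[where f="\<lambda>a. card (above n a)"])
  case (less \<alpha>)
  have B: "subspace (boundaries X n)" by (rule boundaries_subspace)
  show ?case
  proof (cases "\<alpha> \<in> crit M")
    case True
    then show ?thesis using psi_cell_critical less.prems subspace_0[OF B] by simp
  next
    case False
    then obtain a' where a'\<alpha>: "(a', \<alpha>) \<in> M"
      using free less.prems(1) unfolding crit_iff by blast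
    have a': "a' \<in> idx X (n + 1)" by (rule matched_upper_idx[OF a'\<alpha> less.prems(1)])
    obtain g where g: "g \<in> cell X a'" "dent X \<alpha> a' g = v"
      and bd_g: "bd X (n + 1) g = v + (\<Sum>\<delta>\<in>idx X n - {\<alpha>}. dent X \<delta> a' g)"
      using matched_lower_bd[OF a'\<alpha> less.prems] .
    let ?u = "\<lambda>\<delta>. dent X \<delta> a' g"
    have step: "psi_cell n \<delta> (?u \<delta>) - ?u \<delta> \<in> boundaries X n" if \<delta>: "\<delta> \<in> idx X n - {\<alpha>}" for \<delta>
    proof (cases "edge X a' \<delta>")
      case False
      then show ?thesis using dent_no_edge[OF a' _ g(1)] Gamma_0 subspace_0[OF B] by simp
    next
      case True
      then have "(a', \<delta>) \<in> r"
        using \<delta> matched_lower_unique[OF a'\<alpha>] by (blast intro: rgraph_downI)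
      then have "(\<alpha>, \<delta>) \<in> r\<^sup>+" using rgraph_upI[OF a'\<alpha>] by auto
      then have "card (above n \<delta>) < card (above n \<alpha>)" using above_less \<delta> by blast
      then show ?thesis using less.IH \<delta> dent_linear[OF a'] g(1) linear_on_mem by fastforce
    qed
    have "psi_cell n \<alpha> v - v
        = - bd X (n + 1) g - (\<Sum>\<delta>\<in>idx X n - {\<alpha>}. psi_cell n \<delta> (?u \<delta>) - ?u \<delta>)"
      using psi_cell_matched_lower[OF a'\<alpha> less.prems(1) g(1)] g(2) bd_g
      by (simp add: sum_subtractf algebra_simps)
    moreover have "bd X (n + 1) g \<in> boundaries X n"
      unfolding boundaries_def using cell_in_chsp[OF a' g(1)] by blast
    moreover have "(\<Sum>\<delta>\<in>idx X n - {\<alpha>}. psi_cell n \<delta> (?u \<delta>) - ?u \<delta>) \<in> boundaries X n"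
      using step by (rule subspace_sum[OF B])
    ultimately show ?thesis by (simp add: subspace_diff[OF B] subspace_neg[OF B])
  qed
qed

lemma Phi_Psi_diff_boundary:
  assumes free: "\<And>a b. (a, b) \<in> M \<Longrightarrow> a \<notin> idx X n" and s: "s \<in> chsp X n"
  shows "Phi X M n (Psi X M n s) - s \<in> boundaries X n"
proof -
  have "Phi X M n (Psi X M n s) = Psi X M n s"
    by (rule Phi_free[OF free Psi_in_chsp_mcx[OF s]])
  also have "\<dots> = (\<Sum>\<alpha>\<in>idx X n. psi_cell n \<alpha> (comp X n \<alpha> s))"
    unfolding Psi_def ..
  finally have "Phi X M n (Psi X M n s) - s = (\<Sum>\<alpha>\<in>idx X n. psi_cell n \<alpha> (comp X n \<alpha> s) - comp X n \<alpha> s)"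
    using chsp_decomposition[OF s] by (simp add: sum_subtractf)
  also have "\<dots> \<in> boundaries X n"
  proof (rule subspace_sum[OF boundaries_subspace])
    fix \<alpha> assume \<alpha>: "\<alpha> \<in> idx X n"
    show "psi_cell n \<alpha> (comp X n \<alpha> s) - comp X n \<alpha> s \<in> boundaries X n"
      by (rule psi_cell_diff_boundary[OF free \<alpha> comp_in_cell[OF s \<alpha>]])
  qed
  finally show ?thesis .
qed

lemma matched_bd_witness:
  assumes ab: "(a, b) \<in> M" and a: "a \<in> idx X n"
  shows "\<exists>x\<in>cell X a. comp X (n - 1) b (bd X n x) \<noteq> 0"
proof -
  obtain m where "a \<in> idx X m" "b \<in> idx X (m - 1)" "\<exists>x\<in>cell X a. dent X b a x \<noteq> 0"
    using matched_edge[OF ab] unfolding edge_def by blast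
  moreover have "deg X a = n" using deg_eq a by blast
  ultimately show ?thesis unfolding dent_def by auto
qed

lemma matched_cycle_not_in_image:
  assumes ab: "(a, b) \<in> M" and a: "a \<in> idx X n"
  shows "\<exists>z\<in>cycles X (n - 1). z \<notin> Phi X M (n - 1) ` chsp (mcx X M) (n - 1)"
proof -
  obtain x where x: "x \<in> cell X a" and xb: "comp X (n - 1) b (bd X n x) \<noteq> 0"
    using matched_bd_witness[OF ab a] by blast
  have "x \<in> chsp X n" using cell_in_chsp[OF a x] .
  then have "bd X n x \<in> cycles X (n - 1)" using bd_in_chsp bd_bd by (simp add: cycles_def)
  moreover have "bd X n x \<notin> Phi X M (n - 1) ` chsp (mcx X M) (n - 1)"
  proof
    assume "bd X n x \<in> Phi X M (n - 1) ` chsp (mcx X M) (n - 1)"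
    then obtain y where "y \<in> chsp (mcx X M) (n - 1)" "bd X n x = Phi X M (n - 1) y" by blast
    then show False using xb comp_Phi_matched_lower[OF chsp_mcx_subset ab] by metis
  qed
  ultimately show ?thesis by blast
qed

end

section \<open>Sequential Morse matchings\<close>

lemma seq_morse_pairs: "seq_morse Y Ms \<Longrightarrow> M' \<in> set Ms \<Longrightarrow> (a, b) \<in> M' \<Longrightarrow>
   \<exists>k. a \<in> idx Y k \<and> b \<in> idx Y (k - 1)"
proof (induction Ms arbitrary: Y)
  case Nil then show ?case by simp
next
  case (Cons M Ms)
  show ?case
  proof (cases "M' = M")
    case True
    have mm: "morse_matching Y M" using Cons.prems(1) by simp
    have "\<forall>(a, b)\<in>M. edge Y a b" using mm unfolding morse_matching_def by (elim conjE) assumption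
    then have "edge Y a b" using Cons.prems(3) True by blast
    then show ?thesis unfolding edge_def by blast
  next
    case False
    then have "M' \<in> set Ms" using Cons.prems by simp
    then obtain k where "a \<in> idx (mcx Y M) k" "b \<in> idx (mcx Y M) (k - 1)" using Cons by auto
    then show ?thesis by (auto simp: mcx_def)
  qed
qed

lemma (in morse_cx) nn_free_mcx:
  assumes sm: "seq_morse (mcx X M) Ms"
  shows "nn_free (mcx X M) Ms n = nn_free X Ms n"
  unfolding nn_free_def
proof (intro iffI ballI)
  fix M' p assume h: "\<forall>M'\<in>set Ms. \<forall>(a, b)\<in>M'. \<not> (a \<in> idx (mcx X M) n \<and> b \<in> idx (mcx X M) (n - 1))"
    and M': "M' \<in> set Ms" and p: "p \<in> M'"
  obtain a b where ab: "p = (a, b)" by (cases p)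
  obtain k where k: "a \<in> idx (mcx X M) k" "b \<in> idx (mcx X M) (k - 1)"
    using seq_morse_pairs[OF sm M'] p ab by blast
  show "case p of (a, b) \<Rightarrow> \<not> (a \<in> idx X n \<and> b \<in> idx X (n - 1))"
  proof (simp add: ab, intro impI notI)
    assume a: "a \<in> idx X n" and b: "b \<in> idx X (n - 1)"
    have "k = n" using a k idx_unique by auto
    then show False using h M' p ab k by auto
  qed
next
  fix M' p assume h: "\<forall>M'\<in>set Ms. \<forall>(a, b)\<in>M'. \<not> (a \<in> idx X n \<and> b \<in> idx X (n - 1))"
    and M': "M' \<in> set Ms" and p: "p \<in> M'"
  then show "case p of (a, b) \<Rightarrow> \<not> (a \<in> idx (mcx X M) n \<and> b \<in> idx (mcx X M) (n - 1))"
    by (cases p) auto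
qed

lemma (in morse_cx) nn_free_Cons:
  assumes "seq_morse (mcx X M) Ms"
  shows "nn_free X (M # Ms) n \<longleftrightarrow>
    (\<forall>(a, b)\<in>M. \<not> (a \<in> idx X n \<and> b \<in> idx X (n - 1))) \<and> nn_free (mcx X M) Ms n"
  using nn_free_mcx[OF assms] unfolding nn_free_def by auto

lemma morse_cxI: "based_complex X \<Longrightarrow> morse_matching X M \<Longrightarrow> morse_cx X M"
  by (intro morse_cx.intro based_cx.intro morse_cx_axioms.intro)

lemma based_complex_seq_cx: "based_complex X \<Longrightarrow> seq_morse X Ms \<Longrightarrow> based_complex (seq_cx X Ms)"
proof (induction Ms arbitrary: X)
  case (Cons M Ms)
  interpret morse_cx X M using Cons.prems by (simp add: morse_cxI)
  show ?case using Cons based_complex_mcx by simp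
qed simp

lemma seq_Phi_linear:
  "based_complex X \<Longrightarrow> seq_morse X Ms \<Longrightarrow> linear_on (chsp (seq_cx X Ms) n) (chsp X n) (seq_Phi X Ms n)"
proof (induction Ms arbitrary: X)
  case Nil
  then show ?case by (simp add: linear_on_def)
next
  case (Cons M Ms)
  interpret morse_cx X M using Cons.prems by (simp add: morse_cxI)
  have "seq_morse (mcx X M) Ms" using Cons.prems(2) by simp
  then show ?case
    unfolding seq_Phi.simps seq_cx.simps
    by (rule linear_on_comp[OF Cons.IH[OF based_complex_mcx] Phi_linear_mcx])
qed

lemma seq_Psi_linear:
  "based_complex X \<Longrightarrow> seq_morse X Ms \<Longrightarrow> linear_on (chsp X n) (chsp (seq_cx X Ms) n) (seq_Psi X Ms n)"
proof (induction Ms arbitrary: X)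
  case Nil
  then show ?case by (simp add: linear_on_def)
next
  case (Cons M Ms)
  interpret morse_cx X M using Cons.prems by (simp add: morse_cxI)
  have "seq_morse (mcx X M) Ms" using Cons.prems(2) by simp
  then show ?case
    unfolding seq_Psi.simps seq_cx.simps
    by (rule linear_on_comp[OF Psi_linear_mcx Cons.IH[OF based_complex_mcx]])
qed

lemma seq_Phi_Psi_cycle:
  assumes "based_complex X" "seq_morse X Ms" "nn_free X Ms n" "z \<in> cycles X (n - 1)"
  shows "seq_Phi X Ms (n - 1) (seq_Psi X Ms (n - 1) z) = z"
  using assms
proof (induction Ms arbitrary: X z)
  case (Cons M Ms)
  interpret morse_cx X M using Cons.prems by (simp add: morse_cxI)
  have sY: "seq_morse (mcx X M) Ms" using Cons.prems(2) by simp
  have nf: "(\<forall>(a, b)\<in>M. \<not> (a \<in> idx X n \<and> b \<in> idx X (n - 1)))" "nn_free (mcx X M) Ms n"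
    using Cons.prems(3) nn_free_Cons[OF sY] by simp_all
  have free: "\<And>a b. (a, b) \<in> M \<Longrightarrow> a \<notin> idx X n" by (rule free_matched[OF nf(1)])
  let ?p = "Psi X M (n - 1) z"
  have "?p \<in> cycles (mcx X M) (n - 1)" by (rule Psi_cycle_mcx[OF free Cons.prems(4)])
  then have "seq_Phi (mcx X M) Ms (n - 1) (seq_Psi (mcx X M) Ms (n - 1) ?p) = ?p"
    by (rule Cons.IH[OF based_complex_mcx sY nf(2)])
  then show ?case using Phi_Psi_cycle[OF free] Cons.prems(4) by (simp add: cycles_def)
qed simp

lemma seq_Phi_Psi_diff_boundary:
  assumes "based_complex X" "seq_morse X Ms" "nn_free X Ms n" "s \<in> chsp X n"
  shows "seq_Phi X Ms n (seq_Psi X Ms n s) - s \<in> boundaries X n"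
  using assms
proof (induction Ms arbitrary: X s)
  case Nil
  then show ?case using based_cx.boundaries_subspace[of X n] by (simp add: based_cx_def subspace_0)
next
  case (Cons M Ms)
  interpret morse_cx X M using Cons.prems by (simp add: morse_cxI)
  have sY: "seq_morse (mcx X M) Ms" using Cons.prems(2) by simp
  have nf: "(\<forall>(a, b)\<in>M. \<not> (a \<in> idx X n \<and> b \<in> idx X (n - 1)))" "nn_free (mcx X M) Ms n"
    using Cons.prems(3) nn_free_Cons[OF sY] by simp_all
  have free: "\<And>a b. (a, b) \<in> M \<Longrightarrow> a \<notin> idx X n" by (rule free_matched[OF nf(1)])
  let ?t = "Psi X M n s" and ?F = "seq_Phi (mcx X M) Ms n" and ?G = "seq_Psi (mcx X M) Ms n"
  have t: "?t \<in> chsp (mcx X M) n" by (rule Psi_in_chsp_mcx[OF Cons.prems(4)])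
  have "?G ?t \<in> chsp (seq_cx (mcx X M) Ms) n"
    using linear_on_mem[OF seq_Psi_linear[OF based_complex_mcx sY] t] .
  then have FGt: "?F (?G ?t) \<in> chsp (mcx X M) n"
    using linear_on_mem[OF seq_Phi_linear[OF based_complex_mcx sY]] by blast
  have "?F (?G ?t) - ?t \<in> boundaries (mcx X M) n"
    by (rule Cons.IH[OF based_complex_mcx sY nf(2) t])
  then have "Phi X M n (?F (?G ?t) - ?t) \<in> boundaries X n"
    by (rule Phi_boundaries_mcx)
  moreover have "Phi X M n ?t - s \<in> boundaries X n"
    by (rule Phi_Psi_diff_boundary[OF free Cons.prems(4)])
  ultimately have "Phi X M n (?F (?G ?t) - ?t) + (Phi X M n ?t - s) \<in> boundaries X n"
    by (rule subspace_add[OF boundaries_subspace])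
  moreover have "Phi X M n (?F (?G ?t) - ?t) = Phi X M n (?F (?G ?t)) - Phi X M n ?t"
    using linear_on_diff[OF chsp_subspace Phi_linear] chsp_mcx_subset[OF FGt] chsp_mcx_subset[OF t]
    by blast
  ultimately show ?case by simp
qed

lemma seq_nonfree_cycle:
  assumes "based_complex X" "seq_morse X Ms" "\<not> nn_free X Ms n"
  shows "\<exists>z\<in>cycles X (n - 1). z \<notin> seq_Phi X Ms (n - 1) ` chsp (seq_cx X Ms) (n - 1)"
  using assms
proof (induction Ms arbitrary: X)
  case Nil
  then show ?case by (simp add: nn_free_def)
next
  case (Cons M Ms)
  interpret morse_cx X M using Cons.prems by (simp add: morse_cxI)
  have sY: "seq_morse (mcx X M) Ms" using Cons.prems(2) by simp
  let ?Y = "mcx X M" and ?Z = "seq_cx (mcx X M) Ms" and ?F = "seq_Phi (mcx X M) Ms (n - 1)"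
  have F: "?F ` chsp ?Z (n - 1) \<subseteq> chsp ?Y (n - 1)"
    using linear_on_mem[OF seq_Phi_linear[OF based_complex_mcx sY]] by blast
  show ?case
  proof (cases "nn_free ?Y Ms n")
    case True
    then obtain a b where ab: "(a, b) \<in> M" "a \<in> idx X n"
      using Cons.prems(3) nn_free_Cons[OF sY] by auto
    obtain z where "z \<in> cycles X (n - 1)" "z \<notin> Phi X M (n - 1) ` chsp ?Y (n - 1)"
      using matched_cycle_not_in_image[OF ab] by blast
    then show ?thesis using F by auto
  next
    case False
    then obtain z where z: "z \<in> cycles ?Y (n - 1)" "z \<notin> ?F ` chsp ?Z (n - 1)"
      using Cons.IH[OF based_complex_mcx sY] by blast
    then show ?thesis using Phi_cycle_not_in_image[OF z(1) F z(2)] by (auto simp: image_comp)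
  qed
qed

lemma seq_cycles_fixed_iff_nn_free:
  assumes "based_complex X" "seq_morse X Ms"
  shows "(\<forall>z\<in>cycles X (n - 1). seq_Phi X Ms (n - 1) (seq_Psi X Ms (n - 1) z) = z) \<longleftrightarrow> nn_free X Ms n"
proof
  assume fixed: "\<forall>z\<in>cycles X (n - 1). seq_Phi X Ms (n - 1) (seq_Psi X Ms (n - 1) z) = z"
  show "nn_free X Ms n"
  proof (rule ccontr)
    assume "\<not> nn_free X Ms n"
    then obtain z where z: "z \<in> cycles X (n - 1)"
      "z \<notin> seq_Phi X Ms (n - 1) ` chsp (seq_cx X Ms) (n - 1)"
      using seq_nonfree_cycle[OF assms] by blast
    have "seq_Psi X Ms (n - 1) z \<in> chsp (seq_cx X Ms) (n - 1)"
      using linear_on_mem[OF seq_Psi_linear[OF assms]] z(1) by (simp add: cycles_def)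
    moreover have "z = seq_Phi X Ms (n - 1) (seq_Psi X Ms (n - 1) z)" using fixed z(1) by simp
    ultimately show False using z(2) by blast
  qed
qed (use seq_Phi_Psi_cycle[OF assms] in blast)

lemma seq_proj_ker_adj_eq_0:
  assumes "based_complex X" "seq_morse X Ms" "nn_free X Ms n" "s \<in> chsp X n"
  shows "proj {y\<in>chsp X n. adj (chsp X (n + 1)) (chsp X n) (bd X (n + 1)) y = 0}
           (seq_Phi X Ms n (seq_Psi X Ms n s) - s) = 0"
proof -
  interpret based_cx X by unfold_locales (rule assms(1))
  obtain g where "g \<in> chsp X (n + 1)" "seq_Phi X Ms n (seq_Psi X Ms n s) - s = bd X (n + 1) g"
    using seq_Phi_Psi_diff_boundary[OF assms] unfolding boundaries_def by blast
  moreover have "linear_on (chsp X (n + 1)) (chsp X n) (bd X (n + 1))"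
    using bd_linear[of "n + 1"] by simp
  ultimately show ?thesis using proj_ker_adj_image_eq_0[OF chsp_finite_dim chsp_subspace] by simp
qed

theorem mainTheorem9:
  fixes X :: "('a, 'v::real_inner) bcx" and Ms :: "('a \<times> 'a) set list" and n :: int
  assumes "based_complex X" and "seq_morse X Ms"
  shows "((\<forall>s\<in>chsp X n.
             proj {y\<in>chsp X n. adj (chsp X (n + 1)) (chsp X n) (bd X (n + 1)) y = 0}
                  (seq_Phi X Ms n (seq_Psi X Ms n s) - s) = 0) \<and>
          (\<forall>s\<in>chsp X (n - 1).
             proj {y\<in>chsp X (n - 1). bd X (n - 1) y = 0}
                  (adj (chsp X (n - 1)) (chsp (seq_cx X Ms) (n - 1)) (seq_Psi X Ms (n - 1))
                     (adj (chsp (seq_cx X Ms) (n - 1)) (chsp X (n - 1)) (seq_Phi X Ms (n - 1)) s)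
                   - s) = 0))
         \<longleftrightarrow> nn_free X Ms n"
proof -
  interpret based_cx X by unfold_locales (rule assms(1))
  interpret C: based_cx "seq_cx X Ms" by unfold_locales (rule based_complex_seq_cx[OF assms])
  have "(\<forall>s\<in>chsp X (n - 1). proj (cycles X (n - 1))
          (adj (chsp X (n - 1)) (chsp (seq_cx X Ms) (n - 1)) (seq_Psi X Ms (n - 1))
             (adj (chsp (seq_cx X Ms) (n - 1)) (chsp X (n - 1)) (seq_Phi X Ms (n - 1)) s) - s) = 0)
        \<longleftrightarrow> (\<forall>z\<in>cycles X (n - 1). seq_Phi X Ms (n - 1) (seq_Psi X Ms (n - 1) z) = z)"
    by (rule proj_adj_comp_diff_eq_0_iff[OF chsp_finite_dim C.chsp_finite_dim cycles_finite_dim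
          _ seq_Psi_linear[OF assms] seq_Phi_linear[OF assms]]) (auto simp: cycles_def)
  then show ?thesis
    unfolding cycles_def[symmetric] seq_cycles_fixed_iff_nn_free[OF assms]
    using seq_proj_ker_adj_eq_0[OF assms] by blast
qed

end
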